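(* Let $n\ge 2$, let $E \subset \mathbb{R}^n$ be a compact set with $\mathrm{diam}(E) < R$, where $R>0$. Fix $k \in \{1,\ldots, n-1\}$ and let $h \in [0,\infty)$ satisfy $hR < k$. Then there exists a constant $C>0$ depending only on $n,k,hR$ such that \[ \bar\mu(\mathscr{F}_k^-,E) \ge \frac{C}{\mathscr{H}_\Psi(E)}, \qquad \text{where } \, \Psi(t) = \begin{cases} Rt & \text{if } k=1, \\ t^2 |\log(R/t)| & \text{if } k=2, \\ t^2 & \text{if } k \ge 3. \end{cases} \] In particular, $\bar \mu(\mathscr{F}_k^-,E) = +\infty$ whenever $\mathscr{H}_\Psi(E) = 0$.
   Context: For a symmetric matrix $A$ with eigenvalues $\lambda_1(A)\le\dots\le\lambda_n(A)$, set $\mathcal{P}_k^-(A)=\lambda_1(A)+\dots+\lambda_k(A)$. For $h\ge 0$ the operator $\mathscr{F}_k^-$ is $\mathscr{F}_k^-[w] = \mathcal{P}_k^-(\nabla^2 w) - h|\nabla w|$, where $\nabla^2 w$ is the Hessian. Differential inequalities $\mathscr{F}_k^-[w]+cw\ge 0$ for upper semicontinuous $w$ are understood in the viscosity sense. For an open set $\Omega\subset\mathbb{R}^n$, $\bar\mu(\mathscr{F}_k^-,\Omega) = \sup\{c\in\mathbb{R} : \exists\, w \in \mathrm{USC}(\overline\Omega),\ w<0 \text{ on } \overline\Omega,\ \mathscr{F}_k^-[w]+cw\ge 0 \text{ on } \Omega\}$, and for a set $E\subset\mathbb{R}^n$, $\bar\mu(\mathscr{F}_k^-,E)=\sup\{\bar\mu(\mathscr{F}_k^-,\Omega):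 \Omega \text{ open}, E\subset\Omega\}$. For a continuous non-decreasing $\Psi:[0,c)\to[0,\infty)$ with $\Psi(0)=0$ (near $0$), the generalized Hausdorff measure is $\mathscr{H}_\Psi(E) = \lim_{\delta\to 0^+}\inf\{\sum_j \Psi(r_j) : E\subset \bigcup_{j=1}^\infty B_{r_j}(x_j),\ r_j\le\delta\}$. The convention $C/0=+\infty$ is used. *)

theory Defs
  imports "HOL-Analysis.Analysis" "HOL-Computational_Algebra.Polynomial" "HOL-Library.Multiset"
begin

definition charpoly :: "real^'n^'n \<Rightarrow> real poly" where
  "charpoly A = det (\<chi> i j. (if i = j then [:0, 1:] else 0) - [: A $ i $ j :])"

text \<open>The eigenvalues (roots of the characteristic polynomial, counted with
  multiplicity) listed in non-decreasing order: lambda_1 <= ... <= lambda_n.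
  For a symmetric matrix all n eigenvalues are real.\<close>
definition eigenvalues_sorted :: "real^'n^'n \<Rightarrow> real list" where
  "eigenvalues_sorted A = sorted_list_of_multiset (proots (charpoly A))"

definition Pk_minus :: "nat \<Rightarrow> real^'n^'n \<Rightarrow> real" where
  "Pk_minus k A = sum_list (take k (eigenvalues_sorted A))"

definition C2_near :: "(real^'n \<Rightarrow> real) \<Rightarrow> real^'n \<Rightarrow> (real^'n \<Rightarrow> real^'n)
    \<Rightarrow> (real^'n \<Rightarrow> real^'n^'n) \<Rightarrow> bool" where
  "C2_near phi x0 Dphi Hphi \<longleftrightarrow>
     (\<exists>U. open U \<and> x0 \<in> U \<and>
        (\<forall>y\<in>U. (phi has_derivative (\<lambda>v. Dphi y \<bullet> v)) (at y) \<and>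
                (Dphi has_derivative (\<lambda>v. Hphi y *v v)) (at y)) \<and>
        continuous_on U Hphi)"

definition usc_on :: "'a::metric_space set \<Rightarrow> ('a \<Rightarrow> real) \<Rightarrow> bool" where
  "usc_on S w \<longleftrightarrow>
     (\<forall>x\<in>S. \<forall>a. w x < a \<longrightarrow> (\<exists>e>0. \<forall>y\<in>S. dist y x < e \<longrightarrow> w y < a))"

text \<open>Viscosity sense of  P_k^-(D^2 w) - h |D w| + c w >= 0  on the open set Omega:
  whenever a C^2 function phi touches w from above at x0 (w - phi has a local
  maximum at x0), the inequality holds for phi at x0 with w(x0) in the zero-order term.\<close>
definition visc_sub :: "nat \<Rightarrow> real \<Rightarrow> real \<Rightarrow> (real^'n) set \<Rightarrow> (real^'n \<Rightarrow> real) \<Rightarrow> bool" where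
  "visc_sub k h c \<Omega> w \<longleftrightarrow>
     (\<forall>x0\<in>\<Omega>. \<forall>phi Dphi Hphi.
        C2_near phi x0 Dphi Hphi \<longrightarrow>
        (\<exists>r>0. \<forall>y\<in>\<Omega> \<inter> ball x0 r. w y - phi y \<le> w x0 - phi x0) \<longrightarrow>
        Pk_minus k (Hphi x0) - h * norm (Dphi x0) + c * w x0 \<ge> 0)"

definition mu_bar_open :: "nat \<Rightarrow> real \<Rightarrow> (real^'n) set \<Rightarrow> ereal" where
  "mu_bar_open k h \<Omega> = Sup {ereal c | c. \<exists>w. usc_on (closure \<Omega>) w \<and>
       (\<forall>x\<in>closure \<Omega>. w x < 0) \<and> visc_sub k h c \<Omega> w}"

definition mu_bar :: "nat \<Rightarrow> real \<Rightarrow> (real^'n) set \<Rightarrow> ereal" where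
  "mu_bar k h E = Sup {mu_bar_open k h \<Omega> | \<Omega>. open \<Omega> \<and> E \<subseteq> \<Omega>}"

definition gen_hausdorff :: "(real \<Rightarrow> real) \<Rightarrow> (real^'n) set \<Rightarrow> ennreal" where
  "gen_hausdorff \<Psi> E = (SUP \<delta>\<in>{0<..}. INF (x, r)\<in>{(x :: nat \<Rightarrow> real^'n, r :: nat \<Rightarrow> real).
        E \<subseteq> (\<Union>j. ball (x j) (r j)) \<and> (\<forall>j. 0 \<le> r j \<and> r j \<le> \<delta>)}.
        (\<Sum>j. ennreal (\<Psi> (r j))))"

text \<open>The gauge function Psi of the theorem (with Psi(0) = 0 in the case k = 2).\<close>
definition Psi_gauge :: "nat \<Rightarrow> real \<Rightarrow> real \<Rightarrow> real" where
  "Psi_gauge k R t =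
     (if k = 1 then R * t
      else if k = 2 then (if t = 0 then 0 else t^2 * \<bar>ln (R / t)\<bar>)
      else t^2)"

text \<open>C / H with the convention C / 0 = +infinity (and C / infinity = 0).\<close>
definition div_conv :: "real \<Rightarrow> ennreal \<Rightarrow> ereal" where
  "div_conv C H = (if H = 0 then \<infinity> else ereal C / enn2ereal H)"

end

theory Submission
  imports Defs
begin

text \<open>Cover \<open>E\<close> by finitely many balls \<open>B(x\<^sub>j, r\<^sub>j)\<close> that meet \<open>E\<close>, with
  \<open>4 r\<^sub>j \<le> R - diam E\<close> and \<open>\<Sum>\<^sub>j \<Psi>(r\<^sub>j)\<close> close to \<open>\<H>\<^sub>\<Psi>(E)\<close>. On their union \<open>\<Omega>\<close> take
  \<open>w(y) = -\<epsilon> + \<Sum>\<^sub>j F\<^sub>j(|y - x\<^sub>j|\<^sup>2)\<close>, where \<open>F\<^sub>j(R\<^sup>2) = 0\<close> and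
  \<open>F\<^sub>j'(s) = \<lambda>\<^sub>j (s + r\<^sub>j\<^sup>2)\<^bsup>-k/2\<^esup> e\<^bsup>h \<surd>(s + r\<^sub>j\<^sup>2)\<^esup>\<close>. Every point of \<open>\<Omega>\<close> lies within \<open>R\<close>
  of every centre, so \<open>w < 0\<close> on the closure of \<open>\<Omega>\<close>, while integrating \<open>F\<^sub>j'\<close> gives
  \<open>w \<ge> -\<epsilon> - K \<Sum>\<^sub>j \<Psi>(r\<^sub>j)\<close>; this is where the gauge \<open>\<Psi>\<close> comes from.
  The Hessian of a radial term is \<open>2F' I + 4F'' z z\<^sup>T\<close> with \<open>z = y - x\<^sub>j\<close>, and by Ky Fan's principle
  the sum of the \<open>k\<close> smallest eigenvalues of a matrix \<open>\<ge> a I - \<Sum>\<^sub>j b\<^sub>j z\<^sub>j z\<^sub>j\<^sup>T\<close> is at least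
  \<open>k a - \<Sum>\<^sub>j b\<^sub>j |z\<^sub>j|\<^sup>2\<close>, so the contributions of the terms add up. Since \<open>hR < k\<close>, each term
  dominates its share of \<open>h |\<nabla>w|\<close>, by a margin of at least \<open>1\<close> inside its own ball. Hence \<open>w\<close> is a
  subsolution with \<open>c = 1 / (\<epsilon> + K \<Sum>\<^sub>j \<Psi>(r\<^sub>j))\<close>, and letting the covers approach \<open>\<H>\<^sub>\<Psi>(E)\<close>
  gives \<open>\<mu>(E) \<ge> 1 / (K \<H>\<^sub>\<Psi>(E))\<close>.\<close>

section \<open>Spectral theorem for symmetric matrices\<close>

lemma inner_matrix_vector_symmetric:
  fixes H :: "real^'n^'n"
  assumes "transpose H = H"
  shows "x \<bullet> (H *v y) = (H *v x) \<bullet> y"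
proof -
  have "x \<bullet> (H *v y) = (x v* H) \<bullet> y" by (simp add: dot_lmul_matrix)
  also have "x v* H = transpose H *v x" by (simp add: transpose_matrix_vector)
  finally show ?thesis using assms by simp
qed

lemma quadratic_form_add_scaleR:
  fixes H :: "real^'n^'n"
  assumes "transpose H = H"
  shows "(u + t *\<^sub>R w) \<bullet> (H *v (u + t *\<^sub>R w)) =
     u \<bullet> (H *v u) + 2 * t * (w \<bullet> (H *v u)) + t^2 * (w \<bullet> (H *v w))"
proof -
  have "u \<bullet> (H *v w) = w \<bullet> (H *v u)"
    using inner_matrix_vector_symmetric[OF assms, of u w] by (simp add: inner_commute)
  then show ?thesis
    by (simp add: matrix_vector_right_distrib matrix_vector_mult_scaleR inner_add_left
        inner_add_right algebra_simps power2_eq_square)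
qed

lemma quadratic_form_scaleR:
  fixes H :: "real^'n^'n"
  shows "(c *\<^sub>R x) \<bullet> (H *v (c *\<^sub>R x)) = c^2 * (x \<bullet> (H *v x))"
  by (simp add: matrix_vector_mult_scaleR power2_eq_square)

lemma linear_le_quadratic_imp_zero:
  fixes p M :: real
  assumes "\<And>t. 2 * t * p \<le> t^2 * M"
  shows "p = 0"
proof (rule ccontr)
  assume "p \<noteq> 0"
  define A where "A = \<bar>M\<bar> + 1"
  have A: "A > 0" "M \<le> A - 1" unfolding A_def by auto
  have "2 * (p / A) * p \<le> (p / A)^2 * M" by (rule assms)
  then have "2 * p^2 * A \<le> p^2 * M" using A by (simp add: field_simps power2_eq_square)
  moreover have "p^2 > 0" using \<open>p \<noteq> 0\<close> by simp
  ultimately have "2 * A \<le> M" by (simp add: mult.commute)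
  with A show False by linarith
qed

lemma Rayleigh_maximizer_orthogonal:
  fixes H :: "real^'n^'n"
  assumes sym: "transpose H = H" and V: "subspace V"
    and uV: "u \<in> V" and un: "norm u = 1"
    and umax: "\<And>y. y \<in> V \<Longrightarrow> norm y = 1 \<Longrightarrow> y \<bullet> (H *v y) \<le> u \<bullet> (H *v u)"
    and wV: "w \<in> V" and wu: "w \<bullet> u = 0"
  shows "w \<bullet> (H *v u) = 0"
proof (rule linear_le_quadratic_imp_zero)
  fix t :: real
  let ?y = "u + t *\<^sub>R w"
  have uu: "u \<bullet> u = 1" using un by (simp add: norm_eq_1)
  have yy: "?y \<bullet> ?y = 1 + t^2 * (w \<bullet> w)" using uu wu
    by (simp add: inner_add_left inner_add_right inner_commute power2_eq_square)
  then have ypos: "?y \<bullet> ?y > 0" by (smt (verit) inner_ge_zero zero_le_power2 mult_nonneg_nonneg)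
  have norm_y: "norm ?y ^ 2 = ?y \<bullet> ?y" by (simp add: power2_norm_eq_inner)
  have "(1 / norm ?y) *\<^sub>R ?y \<in> V" using uV wV V by (simp add: subspace_add subspace_scale)
  moreover have "norm ((1 / norm ?y) *\<^sub>R ?y) = 1" using ypos by auto
  ultimately have "((1 / norm ?y) *\<^sub>R ?y) \<bullet> (H *v ((1 / norm ?y) *\<^sub>R ?y)) \<le> u \<bullet> (H *v u)"
    by (rule umax)
  then have "(1 / norm ?y)^2 * (?y \<bullet> (H *v ?y)) \<le> u \<bullet> (H *v u)"
    by (simp only: quadratic_form_scaleR)
  then have "?y \<bullet> (H *v ?y) \<le> (u \<bullet> (H *v u)) * (norm ?y)^2"
    using ypos norm_y by (simp add: field_simps power_divide)
  then have "?y \<bullet> (H *v ?y) \<le> (u \<bullet> (H *v u)) * (1 + t^2 * (w \<bullet> w))"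
    using norm_y yy by simp
  then show "2 * t * (w \<bullet> (H *v u)) \<le> t^2 * ((u \<bullet> (H *v u)) * (w \<bullet> w) - w \<bullet> (H *v w))"
    unfolding quadratic_form_add_scaleR[OF sym] by (simp add: algebra_simps)
qed

lemma symmetric_matrix_eigenvector_in_invariant_subspace:
  fixes H :: "real^'n^'n"
  assumes sym: "transpose H = H" and V: "subspace V" and inv: "\<forall>v\<in>V. H *v v \<in> V"
    and ne: "V \<noteq> {0}"
  obtains u where "u \<in> V" "norm u = 1" "H *v u = (u \<bullet> (H *v u)) *\<^sub>R u"
proof -
  define S where "S = V \<inter> sphere 0 1"
  have cS: "compact S" unfolding S_def using closed_subspace[OF V] by (simp add: closed_Int_compact)
  obtain v where "v \<in> V" "v \<noteq> 0" using ne V subspace_0 by blast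
  then have "(1 / norm v) *\<^sub>R v \<in> S" unfolding S_def using V by (simp add: subspace_scale)
  then have neS: "S \<noteq> {}" by blast
  have cont: "continuous_on S (\<lambda>x. x \<bullet> (H *v x))"
    by (intro continuous_intros linear_continuous_on matrix_vector_mul_linear)
  obtain u where u: "u \<in> S" and umax: "\<And>y. y \<in> S \<Longrightarrow> y \<bullet> (H *v y) \<le> u \<bullet> (H *v u)"
    using continuous_attains_sup[OF cS neS cont] by blast
  have uV: "u \<in> V" and un: "norm u = 1" using u unfolding S_def by auto
  have uu: "u \<bullet> u = 1" using un by (simp add: norm_eq_1)
  define \<mu> where "\<mu> = u \<bullet> (H *v u)"
  define d where "d = H *v u - \<mu> *\<^sub>R u"
  have dV: "d \<in> V" unfolding d_def using inv uV V by (simp add: subspace_diff subspace_scale)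
  have du: "d \<bullet> u = 0"
  proof -
    have "u \<bullet> d = u \<bullet> (H *v u) - \<mu> * (u \<bullet> u)" unfolding d_def by (simp add: inner_diff_right)
    then show ?thesis using uu unfolding \<mu>_def by (simp add: inner_commute)
  qed
  have umax': "y \<bullet> (H *v y) \<le> u \<bullet> (H *v u)" if "y \<in> V" "norm y = 1" for y
    using that by (intro umax) (simp add: S_def)
  have dH: "d \<bullet> (H *v u) = 0" by (rule Rayleigh_maximizer_orthogonal[OF sym V uV un umax' dV du])
  have "d \<bullet> d = 0" using du dH unfolding d_def
    by (simp add: inner_diff_right inner_diff_left inner_commute)
  then have "d = 0" by simp
  then show ?thesis using that[OF uV un] unfolding d_def \<mu>_def by simp
qed

lemma symmetric_matrix_orthogonal_complement_invariant:
  fixes H :: "real^'n^'n"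
  assumes sym: "transpose H = H" and inv: "\<forall>v\<in>V. H *v v \<in> V" and uH: "H *v u = \<mu> *\<^sub>R u"
  shows "\<forall>v\<in>V \<inter> {x. x \<bullet> u = 0}. H *v v \<in> V \<inter> {x. x \<bullet> u = 0}"
proof
  fix v assume v: "v \<in> V \<inter> {x. x \<bullet> u = 0}"
  have "(H *v v) \<bullet> u = v \<bullet> (H *v u)" using inner_matrix_vector_symmetric[OF sym, of v u] by simp
  also have "\<dots> = 0" using v by (simp add: uH)
  finally show "H *v v \<in> V \<inter> {x. x \<bullet> u = 0}" using v inv by auto
qed

lemma subspace_subset_span_insert_unit:
  fixes u :: "'a::real_inner"
  assumes V: "subspace V" and uV: "u \<in> V" and uu: "u \<bullet> u = 1"
    and span: "V \<inter> {x. x \<bullet> u = 0} \<subseteq> span B"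
  shows "V \<subseteq> span (insert u B)"
proof
  fix v assume v: "v \<in> V"
  have "v - (v \<bullet> u) *\<^sub>R u \<in> V \<inter> {x. x \<bullet> u = 0}" using v uV V uu
    by (simp add: subspace_diff subspace_scale inner_diff_left)
  then have "v - (v \<bullet> u) *\<^sub>R u \<in> span (insert u B)"
    using span span_mono[of B "insert u B"] by auto
  moreover have "(v \<bullet> u) *\<^sub>R u \<in> span (insert u B)" by (simp add: span_base span_scale)
  ultimately have "(v - (v \<bullet> u) *\<^sub>R u) + (v \<bullet> u) *\<^sub>R u \<in> span (insert u B)" by (rule span_add)
  then show "v \<in> span (insert u B)" by simp
qed

lemma invariant_subspace_orthonormal_eigenbasis:
  fixes H :: "real^'n^'n"
  assumes sym: "transpose H = H"
  shows "subspace V \<Longrightarrow> (\<forall>v\<in>V. H *v v \<in> V) \<Longrightarrow>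
    \<exists>B. B \<subseteq> V \<and> pairwise orthogonal B \<and>
        (\<forall>b\<in>B. norm b = 1 \<and> H *v b = (b \<bullet> (H *v b)) *\<^sub>R b) \<and> V \<subseteq> span B"
proof (induction "dim V" arbitrary: V rule: less_induct)
  case less
  show ?case
  proof (cases "V = {0}")
    case True
    then show ?thesis by (intro exI[of _ "{}"]) auto
  next
    case False
    obtain u where uV: "u \<in> V" and un: "norm u = 1" and uH: "H *v u = (u \<bullet> (H *v u)) *\<^sub>R u"
      using symmetric_matrix_eigenvector_in_invariant_subspace[OF sym less.prems False] by blast
    have uu: "u \<bullet> u = 1" using un by (simp add: norm_eq_1)
    define V' where "V' = V \<inter> {x. x \<bullet> u = 0}"
    have sV': "subspace V'" unfolding V'_def
      using less.prems(1) subspace_hyperplane2 by (rule subspace_inter)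
    have iV': "\<forall>v\<in>V'. H *v v \<in> V'"
      unfolding V'_def by (rule symmetric_matrix_orthogonal_complement_invariant[OF sym less.prems(2) uH])
    have "u \<notin> V'" unfolding V'_def using uu by simp
    then have "V' \<subset> V" using uV unfolding V'_def by blast
    moreover have s1: "span V' = V'" and s2: "span V = V"
      using sV' less.prems(1) by (simp_all add: span_eq_iff)
    ultimately have "span V' \<subset> span V" by (simp only: s1 s2)
    then have "dim V' < dim V" by (rule dim_psubset)
    from less.hyps[OF this sV' iV'] obtain B' where B': "B' \<subseteq> V'" "pairwise orthogonal B'"
      "\<forall>b\<in>B'. norm b = 1 \<and> H *v b = (b \<bullet> (H *v b)) *\<^sub>R b" "V' \<subseteq> span B'" by blast
    have uB': "u \<notin> B'" using B'(1) uu unfolding V'_def by auto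
    show ?thesis
    proof (intro exI[of _ "insert u B'"] conjI)
      show "insert u B' \<subseteq> V" using B'(1) uV unfolding V'_def by auto
      show "pairwise orthogonal (insert u B')"
        using B'(1,2) uB' unfolding pairwise_insert V'_def orthogonal_def
        by (auto simp: inner_commute)
      show "\<forall>b\<in>insert u B'. norm b = 1 \<and> H *v b = (b \<bullet> (H *v b)) *\<^sub>R b"
        using B'(3) un uH by auto
      show "V \<subseteq> span (insert u B')"
        using subspace_subset_span_insert_unit[OF less.prems(1) uV uu] B'(4) unfolding V'_def .
    qed
  qed
qed

lemma symmetric_matrix_orthonormal_eigenbasis:
  fixes H :: "real^'n^'n"
  assumes sym: "transpose H = H"
  obtains e :: "'n \<Rightarrow> real^'n" and lam :: "'n \<Rightarrow> real"
  where "\<And>i j. e i \<bullet> e j = (if i = j then 1 else 0)" and "\<And>i. H *v e i = lam i *\<^sub>R e i"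
proof -
  obtain B where B: "pairwise orthogonal B"
      "\<forall>b\<in>B. norm b = 1 \<and> H *v b = (b \<bullet> (H *v b)) *\<^sub>R b" "UNIV \<subseteq> span B"
    using invariant_subspace_orthonormal_eigenbasis[OF sym, of UNIV] by auto
  have "0 \<notin> B" using B(2) by force
  then have ind: "independent B" using B(1) by (rule pairwise_orthogonal_independent[rotated])
  have "finite B" using indep_card_eq_dim_span[OF ind] by simp
  moreover have "card B = dim (UNIV :: (real^'n) set)"
    using ind B(3) by (intro basis_card_eq_dim) auto
  ultimately obtain e where e: "bij_betw e (UNIV::'n set) B"
    using finite_same_card_bij[of "UNIV::'n set" B] by (auto simp: dim_UNIV)
  have eB: "e i \<in> B" for i using e by (auto simp: bij_betw_def)
  have orth: "e i \<bullet> e j = (if i = j then 1 else 0)" for i j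
  proof (cases "i = j")
    case True
    then show ?thesis using B(2) eB[of i] by (simp add: norm_eq_1)
  next
    case False
    then have "e i \<noteq> e j" using e by (auto simp: bij_betw_def inj_on_def)
    then show ?thesis using B(1) eB[of i] eB[of j] False
      unfolding pairwise_def orthogonal_def by auto
  qed
  show ?thesis by (rule that[OF orth, of "\<lambda>i. e i \<bullet> (H *v e i)"]) (use B(2) eB in auto)
qed

section \<open>The sum of the \<open>k\<close> smallest eigenvalues\<close>

lemma poly_det:
  fixes M :: "'a::comm_ring_1 poly^'n^'n"
  shows "poly (det M) x = det (\<chi> i j. poly (M$i$j) x)"
  unfolding det_def by (simp add: poly_sum poly_prod)

lemma poly_charpoly:
  fixes A :: "real^'n^'n"
  shows "poly (charpoly A) x = det (\<chi> i j. (if i = j then x else 0) - A$i$j)"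
  unfolding charpoly_def poly_det by (intro arg_cong[where f=det]) (simp add: vec_eq_iff)

lemma det_scalar_minus_orthonormal_eigenbasis:
  fixes H :: "real^'n^'n" and e :: "'n \<Rightarrow> real^'n"
  assumes orth: "\<And>i j. e i \<bullet> e j = (if i = j then 1 else 0)"
    and eig: "\<And>i. H *v e i = lam i *\<^sub>R e i"
  shows "det (\<chi> i j. (if i = j then x else 0) - H$i$j) = (\<Prod>i\<in>UNIV. x - lam i)"
proof -
  define M where "M = ((\<chi> i j. (if i = j then x else 0) - H$i$j) :: real^'n^'n)"
  define Q where "Q = ((\<chi> i j. e j $ i) :: real^'n^'n)"
  have Me: "M *v e j = (x - lam j) *\<^sub>R e j" for j
  proof -
    have "M *v e j = x *\<^sub>R e j - H *v e j"
      unfolding M_def matrix_vector_mult_def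
      by (simp add: vec_eq_iff left_diff_distrib sum_subtractf if_distrib[of "\<lambda>z. z * _"]
          if_distribR sum.delta cong: if_cong)
    then show ?thesis using eig[of j] by (simp add: algebra_simps)
  qed
  have QtMQ: "transpose Q ** (M ** Q) = (\<chi> i j. if i = j then x - lam j else 0)"
  proof -
    have "(transpose Q ** (M ** Q)) $ i $ j = e i \<bullet> (M *v e j)" for i j
      unfolding matrix_matrix_mult_def inner_vec_def matrix_vector_mult_def
      by (simp add: transpose_def Q_def)
    then show ?thesis using orth by (simp add: vec_eq_iff Me)
  qed
  have QtQ: "transpose Q ** Q = mat 1"
  proof -
    have "(transpose Q ** Q) $ i $ j = e i \<bullet> e j" for i j
      unfolding matrix_matrix_mult_def inner_vec_def by (simp add: transpose_def Q_def)
    then show ?thesis using orth by (simp add: vec_eq_iff mat_def)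
  qed
  have dQ: "det Q * det Q = 1"
    using arg_cong[OF QtQ, of det] by (simp add: det_mul det_transpose det_I)
  have "det M = det (transpose Q ** (M ** Q))"
    using dQ by (simp add: det_mul det_transpose)
  also have "\<dots> = (\<Prod>i\<in>UNIV. x - lam i)" unfolding QtMQ by (subst det_diagonal) auto
  finally show ?thesis unfolding M_def .
qed

lemma image_mset_mset_set_eq_sum:
  "finite A \<Longrightarrow> image_mset f (mset_set A) = (\<Sum>x\<in>A. {#f x#})"
  by (induction A rule: finite_induct) auto

lemma proots_charpoly_orthonormal_eigenbasis:
  fixes H :: "real^'n^'n" and e :: "'n \<Rightarrow> real^'n"
  assumes orth: "\<And>i j. e i \<bullet> e j = (if i = j then 1 else 0)"
    and eig: "\<And>i. H *v e i = lam i *\<^sub>R e i"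
  shows "proots (charpoly H) = image_mset lam (mset_set UNIV)"
proof -
  have "poly (charpoly H) = poly (\<Prod>i\<in>UNIV. [:- lam i, 1:])"
    by (rule ext) (simp add: poly_charpoly det_scalar_minus_orthonormal_eigenbasis[OF orth eig] poly_prod)
  then have "charpoly H = (\<Prod>i\<in>UNIV. [:- lam i, 1:])" by (simp add: poly_eq_poly_eq_iff)
  then have "proots (charpoly H) = (\<Sum>i\<in>UNIV. proots [:- lam i, 1:])"
    by (simp add: proots_prod)
  also have "\<dots> = (\<Sum>i\<in>UNIV. {#lam i#})" by (simp add: proots_linear_factor)
  finally show ?thesis by (simp add: image_mset_mset_set_eq_sum)
qed

lemma subseteq_image_mset_imp_ex:
  "N \<subseteq># image_mset f A \<Longrightarrow> \<exists>B. B \<subseteq># A \<and> image_mset f B = N"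
proof (induction N arbitrary: A)
  case empty
  then show ?case by (intro exI[of _ "{#}"]) auto
next
  case (add x N)
  have "x \<in># image_mset f A" using add.prems by (meson insert_subset_eq_iff)
  then obtain a where a: "a \<in># A" "f a = x" by auto
  have "N \<subseteq># image_mset f A - {#x#}" using add.prems by (simp add: insert_subset_eq_iff)
  also have "image_mset f A - {#x#} = image_mset f (A - {#a#})"
    using a by (simp add: image_mset_Diff)
  finally obtain B where B: "B \<subseteq># A - {#a#}" "image_mset f B = N" using add.IH by blast
  show ?case
  proof (intro exI[of _ "add_mset a B"] conjI)
    show "add_mset a B \<subseteq># A" using B(1) a(1)
      by (metis insert_DiffM insert_subset_eq_iff mset_subset_eq_add_mset_cancel)
    show "image_mset f (add_mset a B) = add_mset x N" using B(2) a(2) by simp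
  qed
qed

lemma subseteq_mset_set_UNIV_eq:
  fixes B :: "'a::finite multiset"
  assumes "B \<subseteq># mset_set UNIV"
  shows "B = mset_set (set_mset B)"
proof (rule multiset_eqI)
  fix a
  have le1: "count B a \<le> 1" using mset_subset_eq_count[OF assms, of a] by (simp add: count_mset_set)
  show "count B a = count (mset_set (set_mset B)) a"
  proof (cases "a \<in># B")
    case True
    then have "0 < count B a" by (simp only: count_greater_zero_iff)
    with le1 have "count B a = 1" by linarith
    then show ?thesis using True by (simp add: count_mset_set)
  qed (simp add: count_mset_set not_in_iff)
qed

lemma Pk_minus_orthonormal_eigenbasis:
  fixes H :: "real^'n^'n" and e :: "'n \<Rightarrow> real^'n"
  assumes orth: "\<And>i j. e i \<bullet> e j = (if i = j then 1 else 0)"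
    and eig: "\<And>i. H *v e i = lam i *\<^sub>R e i" and k: "k \<le> CARD('n)"
  obtains S where "card S = k" and "Pk_minus k H = (\<Sum>i\<in>S. lam i)"
proof -
  define L where "L = sorted_list_of_multiset (image_mset lam (mset_set (UNIV::'n set)))"
  have mL: "mset L = image_mset lam (mset_set UNIV)" unfolding L_def by simp
  have "mset (take k L) \<subseteq># mset L"
    by (metis append_take_drop_id mset_append mset_subset_eq_add_left)
  then obtain B where B: "B \<subseteq># mset_set UNIV" "image_mset lam B = mset (take k L)"
    using subseteq_image_mset_imp_ex mL by metis
  define S where "S = set_mset B"
  have BS: "B = mset_set S" unfolding S_def by (rule subseteq_mset_set_UNIV_eq[OF B(1)])
  have "length L = CARD('n)" using arg_cong[OF mL, of size] by simp
  then have "card S = k" using arg_cong[OF B(2), of size] k by (simp add: BS)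
  moreover have "Pk_minus k H = (\<Sum>i\<in>S. lam i)"
  proof -
    have "Pk_minus k H = sum_list (take k L)"
      unfolding Pk_minus_def eigenvalues_sorted_def proots_charpoly_orthonormal_eigenbasis[OF orth eig]
        L_def ..
    also have "\<dots> = sum_mset (image_mset lam B)" using B(2) by (simp add: sum_mset_sum_list)
    also have "\<dots> = (\<Sum>i\<in>S. lam i)" unfolding BS by (simp add: sum_unfold_sum_mset)
    finally show ?thesis .
  qed
  ultimately show ?thesis using that by blast
qed

lemma Bessel_inequality:
  fixes e :: "'i \<Rightarrow> 'a::real_inner"
  assumes orth: "\<And>i j. e i \<bullet> e j = (if i = j then 1 else 0)" and S: "finite S"
  shows "(\<Sum>i\<in>S. (z \<bullet> e i)^2) \<le> z \<bullet> z"
proof -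
  define p where "p = (\<Sum>i\<in>S. (z \<bullet> e i) *\<^sub>R e i)"
  have pp: "p \<bullet> p = (\<Sum>i\<in>S. (z \<bullet> e i)^2)"
    unfolding p_def using S
    by (simp add: inner_sum_left inner_sum_right orth if_distrib power2_eq_square sum.delta
        cong: if_cong)
  have zp: "z \<bullet> p = (\<Sum>i\<in>S. (z \<bullet> e i)^2)"
    unfolding p_def by (simp add: inner_sum_right power2_eq_square)
  have "0 \<le> (z - p) \<bullet> (z - p)" by simp
  also have "\<dots> = z \<bullet> z - 2 * (z \<bullet> p) + p \<bullet> p"
    by (simp add: inner_diff_left inner_diff_right inner_commute)
  finally show ?thesis using pp zp by simp
qed

lemma Pk_minus_ge_if_quadratic_form_ge:
  fixes H :: "real^'n^'n" and z :: "'j \<Rightarrow> real^'n"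
  assumes sym: "transpose H = H" and k: "k \<le> CARD('n)"
    and b: "\<And>j. j \<in> J \<Longrightarrow> b j \<ge> 0"
    and quad: "\<And>v. v \<bullet> (H *v v) \<ge> a * (v \<bullet> v) - (\<Sum>j\<in>J. b j * (z j \<bullet> v)^2)"
  shows "Pk_minus k H \<ge> real k * a - (\<Sum>j\<in>J. b j * (z j \<bullet> z j))"
proof -
  obtain e :: "'n \<Rightarrow> real^'n" and lam
    where orth: "\<And>i j. e i \<bullet> e j = (if i = j then 1 else 0)" and eig: "\<And>i. H *v e i = lam i *\<^sub>R e i"
    using symmetric_matrix_orthonormal_eigenbasis[OF sym] by blast
  obtain S where S: "card S = k" and Pk: "Pk_minus k H = (\<Sum>i\<in>S. lam i)"
    using Pk_minus_orthonormal_eigenbasis[OF orth eig k] by blast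
  have "(\<Sum>j\<in>J. b j * (\<Sum>i\<in>S. (z j \<bullet> e i)^2)) \<le> (\<Sum>j\<in>J. b j * (z j \<bullet> z j))"
    by (intro sum_mono mult_left_mono Bessel_inequality[OF orth] b) simp_all
  then have "real k * a - (\<Sum>j\<in>J. b j * (z j \<bullet> z j)) \<le>
      real k * a - (\<Sum>j\<in>J. b j * (\<Sum>i\<in>S. (z j \<bullet> e i)^2))" by linarith
  also have "\<dots> = (\<Sum>i\<in>S. a - (\<Sum>j\<in>J. b j * (z j \<bullet> e i)^2))"
    using S by (simp add: sum_subtractf sum_distrib_left sum.swap[of _ S J])
  also have "\<dots> \<le> (\<Sum>i\<in>S. lam i)"
  proof (rule sum_mono)
    fix i
    have "lam i = e i \<bullet> (H *v e i)" using orth[of i i] by (simp add: eig)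
    then show "a - (\<Sum>j\<in>J. b j * (z j \<bullet> e i)^2) \<le> lam i" using quad[of "e i"] orth[of i i] by simp
  qed
  finally show ?thesis unfolding Pk .
qed

section \<open>Second-order calculus\<close>

lemma has_real_derivative_along_line:
  fixes f :: "'a::real_inner \<Rightarrow> real"
  assumes "(f has_derivative (\<lambda>u. D \<bullet> u)) (at (x + t *\<^sub>R v))"
  shows "((\<lambda>t. f (x + t *\<^sub>R v)) has_real_derivative (D \<bullet> v)) (at t)"
proof -
  have "((\<lambda>t. x + t *\<^sub>R v) has_derivative (\<lambda>u. u *\<^sub>R v)) (at t)"
    by (auto intro!: derivative_eq_intros)
  from has_derivative_compose[OF this assms]
  have "((\<lambda>t. f (x + t *\<^sub>R v)) has_derivative (\<lambda>u. D \<bullet> (u *\<^sub>R v))) (at t)" .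
  moreover have "(\<lambda>u. D \<bullet> (u *\<^sub>R v)) = (*) (D \<bullet> v)" by (auto simp: mult.commute)
  ultimately show ?thesis by (simp add: has_field_derivative_def)
qed

lemma mean_value_along_line:
  fixes f :: "'a::real_inner \<Rightarrow> real"
  assumes t: "0 < t"
    and der: "\<And>s. 0 \<le> s \<Longrightarrow> s \<le> t \<Longrightarrow>
      (f has_derivative (\<lambda>v. D (x + s *\<^sub>R d) \<bullet> v)) (at (x + s *\<^sub>R d))"
  obtains \<sigma> where "0 < \<sigma>" "\<sigma> < t" "f (x + t *\<^sub>R d) - f x = t * (D (x + \<sigma> *\<^sub>R d) \<bullet> d)"
proof -
  have "((\<lambda>s. f (x + s *\<^sub>R d)) has_real_derivative D (x + s *\<^sub>R d) \<bullet> d) (at s)"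
    if "0 \<le> s" "s \<le> t" for s
    using der[OF that] by (rule has_real_derivative_along_line)
  from MVT2[OF t this] show ?thesis using that by auto
qed

lemma has_real_derivative_matrix_along_line:
  fixes F :: "real^'n \<Rightarrow> real^'m"
  assumes "(F has_derivative (\<lambda>u. M *v u)) (at x)"
  shows "((\<lambda>t. F (x + t *\<^sub>R v) \<bullet> w) has_real_derivative ((M *v v) \<bullet> w)) (at 0)"
proof -
  have "((\<lambda>t. x + t *\<^sub>R v) has_derivative (\<lambda>u. u *\<^sub>R v)) (at 0)"
    by (auto intro!: derivative_eq_intros)
  from has_derivative_compose[OF this] assms
  have "((\<lambda>t. F (x + t *\<^sub>R v)) has_derivative (\<lambda>u. M *v (u *\<^sub>R v))) (at 0)" by simp
  from bounded_linear.has_derivative[OF bounded_linear_inner_left this]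
  have "((\<lambda>t. F (x + t *\<^sub>R v) \<bullet> w) has_derivative (\<lambda>u. (M *v (u *\<^sub>R v)) \<bullet> w)) (at 0)" .
  moreover have "(\<lambda>u. (M *v (u *\<^sub>R v)) \<bullet> w) = (*) ((M *v v) \<bullet> w)"
    by (auto simp: matrix_vector_mult_scaleR mult.commute)
  ultimately show ?thesis by (simp add: has_field_derivative_def)
qed

lemma has_derivative_matrix_row:
  assumes "(F has_derivative (\<lambda>v. M *v v)) (at y)"
  shows "((\<lambda>y. F y $ i) has_derivative (\<lambda>v. (\<chi> j. M $ i $ j) \<bullet> v)) (at y)"
proof -
  have "((\<lambda>y. F y $ i) has_derivative (\<lambda>v. (M *v v) $ i)) (at y)"
    using bounded_linear.has_derivative[OF bounded_linear_vec_nth assms] .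
  moreover have "(\<lambda>v. (M *v v) $ i) = (\<lambda>v. (\<chi> j. M $ i $ j) \<bullet> v)"
    by (auto simp: matrix_vector_mult_def inner_vec_def)
  ultimately show ?thesis by simp
qed

lemma second_difference_eq_hessian_entry:
  fixes phi :: "real^'n \<Rightarrow> real"
  assumes der: "\<And>y. y \<in> ball x0 r \<Longrightarrow> (phi has_derivative (\<lambda>v. Dphi y \<bullet> v)) (at y) \<and>
                (Dphi has_derivative (\<lambda>v. Hphi y *v v)) (at y)"
    and t: "0 < t" "2 * t < r"
  obtains P where "dist P x0 \<le> 2 * t"
    and "phi (x0 + t *\<^sub>R axis i 1 + t *\<^sub>R axis j 1) - phi (x0 + t *\<^sub>R axis i 1)
      - phi (x0 + t *\<^sub>R axis j 1) + phi x0 = t^2 * Hphi P $ i $ j"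
proof -
  define a :: "real^'n" where "a = axis i 1"
  define b :: "real^'n" where "b = axis j 1"
  have near: "dist (x0 + \<alpha> *\<^sub>R a + \<beta> *\<^sub>R b) x0 \<le> \<alpha> + \<beta>" if "0 \<le> \<alpha>" "0 \<le> \<beta>" for \<alpha> \<beta>
  proof -
    have "norm (\<alpha> *\<^sub>R a + \<beta> *\<^sub>R b) \<le> norm (\<alpha> *\<^sub>R a) + norm (\<beta> *\<^sub>R b)" by (rule norm_triangle_ineq)
    then show ?thesis using that by (simp add: dist_norm a_def b_def norm_axis_1 add.assoc)
  qed
  have inball: "x0 + \<alpha> *\<^sub>R a + \<beta> *\<^sub>R b \<in> ball x0 r"
    if "0 \<le> \<alpha>" "\<alpha> \<le> t" "0 \<le> \<beta>" "\<beta> \<le> t" for \<alpha> \<beta>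
    using near[of \<alpha> \<beta>] that t by (simp add: dist_commute)
  define F1 where "F1 y = phi (y + t *\<^sub>R b) - phi y" for y
  obtain \<sigma> where \<sigma>: "0 < \<sigma>" "\<sigma> < t"
    and e1: "F1 (x0 + t *\<^sub>R a) - F1 x0 = t * ((Dphi (x0 + \<sigma> *\<^sub>R a + t *\<^sub>R b) - Dphi (x0 + \<sigma> *\<^sub>R a)) \<bullet> a)"
  proof (rule mean_value_along_line[OF t(1)])
    fix s assume s: "0 \<le> s" "s \<le> t"
    let ?y = "x0 + s *\<^sub>R a"
    have "((\<lambda>y. y + t *\<^sub>R b) has_derivative (\<lambda>v. v)) (at ?y)" by (auto intro!: derivative_eq_intros)
    moreover have "(phi has_derivative (\<lambda>v. Dphi (?y + t *\<^sub>R b) \<bullet> v)) (at (?y + t *\<^sub>R b))"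
      using der[OF inball[of s t]] s t by simp
    ultimately have "((\<lambda>y. phi (y + t *\<^sub>R b)) has_derivative (\<lambda>v. Dphi (?y + t *\<^sub>R b) \<bullet> v)) (at ?y)"
      by (rule has_derivative_compose)
    moreover have "(phi has_derivative (\<lambda>v. Dphi ?y \<bullet> v)) (at ?y)" using der[OF inball[of s 0]] s t by simp
    ultimately show "(F1 has_derivative (\<lambda>v. (Dphi (?y + t *\<^sub>R b) - Dphi ?y) \<bullet> v)) (at ?y)"
      unfolding F1_def inner_diff_left by (rule has_derivative_diff)
  qed
  define y\<sigma> where "y\<sigma> = x0 + \<sigma> *\<^sub>R a"
  obtain \<tau> where \<tau>: "0 < \<tau>" "\<tau> < t"
    and e2: "Dphi (y\<sigma> + t *\<^sub>R b) $ i - Dphi y\<sigma> $ i = t * ((\<chi> k. Hphi (y\<sigma> + \<tau> *\<^sub>R b) $ i $ k) \<bullet> b)"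
  proof (rule mean_value_along_line[OF t(1), where f="\<lambda>y. Dphi y $ i"])
    fix s assume s: "0 \<le> s" "s \<le> t"
    have "y\<sigma> + s *\<^sub>R b \<in> ball x0 r" using inball[of \<sigma> s] s \<sigma> by (simp add: y\<sigma>_def)
    then show "((\<lambda>y. Dphi y $ i) has_derivative (\<lambda>v. (\<chi> k. Hphi (y\<sigma> + s *\<^sub>R b) $ i $ k) \<bullet> v))
        (at (y\<sigma> + s *\<^sub>R b))"
      using der by (intro has_derivative_matrix_row) blast
  qed
  define P where "P = y\<sigma> + \<tau> *\<^sub>R b"
  show ?thesis
  proof (rule that[of P])
    show "dist P x0 \<le> 2 * t" using near[of \<sigma> \<tau>] \<sigma> \<tau> unfolding P_def y\<sigma>_def by linarith
    have "phi (x0 + t *\<^sub>R axis i 1 + t *\<^sub>R axis j 1) - phi (x0 + t *\<^sub>R axis i 1)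
        - phi (x0 + t *\<^sub>R axis j 1) + phi x0 = F1 (x0 + t *\<^sub>R a) - F1 x0"
      unfolding F1_def a_def b_def by (simp add: algebra_simps)
    also have "\<dots> = t * (t * Hphi P $ i $ j)"
      using e1 e2 unfolding y\<sigma>_def P_def a_def b_def by (simp add: inner_axis inner_diff_left)
    finally show "phi (x0 + t *\<^sub>R axis i 1 + t *\<^sub>R axis j 1) - phi (x0 + t *\<^sub>R axis i 1)
        - phi (x0 + t *\<^sub>R axis j 1) + phi x0 = t^2 * Hphi P $ i $ j"
      by (simp add: power2_eq_square)
  qed
qed

lemma hessian_entries_swap_nearby:
  fixes phi :: "real^'n \<Rightarrow> real"
  assumes der: "\<And>y. y \<in> ball c r \<Longrightarrow> (phi has_derivative (\<lambda>v. Dphi y \<bullet> v)) (at y) \<and>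
                (Dphi has_derivative (\<lambda>v. Hphi y *v v)) (at y)"
    and t: "0 < t" "2 * t < r"
  shows "\<exists>P Q. dist P c \<le> 2 * t \<and> dist Q c \<le> 2 * t \<and> Hphi P $ i $ j = Hphi Q $ j $ i"
proof -
  obtain P where P: "dist P c \<le> 2 * t" and eP: "phi (c + t *\<^sub>R axis i 1 + t *\<^sub>R axis j 1)
      - phi (c + t *\<^sub>R axis i 1) - phi (c + t *\<^sub>R axis j 1) + phi c = t^2 * Hphi P $ i $ j"
    by (rule second_difference_eq_hessian_entry[OF der t])
  obtain Q where Q: "dist Q c \<le> 2 * t" and eQ: "phi (c + t *\<^sub>R axis j 1 + t *\<^sub>R axis i 1)
      - phi (c + t *\<^sub>R axis j 1) - phi (c + t *\<^sub>R axis i 1) + phi c = t^2 * Hphi Q $ j $ i"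
    by (rule second_difference_eq_hessian_entry[OF der t])
  have "t^2 * Hphi P $ i $ j = t^2 * Hphi Q $ j $ i" using eP eQ by (simp add: algebra_simps)
  then show ?thesis using P Q t(1) by auto
qed

lemma C2_near_hessian_symmetric:
  assumes "C2_near phi x0 Dphi Hphi"
  shows "transpose (Hphi x0) = Hphi x0"
proof -
  obtain U where U: "open U" "x0 \<in> U"
    and der: "\<forall>y\<in>U. (phi has_derivative (\<lambda>v. Dphi y \<bullet> v)) (at y) \<and>
                (Dphi has_derivative (\<lambda>v. Hphi y *v v)) (at y)"
    and cont: "continuous_on U Hphi"
    using assms unfolding C2_near_def by blast
  obtain r where r: "r > 0" "ball x0 r \<subseteq> U" using U open_contains_ball by blast
  have der': "\<And>y. y \<in> ball x0 r \<Longrightarrow> (phi has_derivative (\<lambda>v. Dphi y \<bullet> v)) (at y) \<and>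
      (Dphi has_derivative (\<lambda>v. Hphi y *v v)) (at y)" using der r by blast
  have "isCont Hphi x0" using cont U continuous_on_eq_continuous_at by blast
  then have entry_lim: "(\<lambda>n. Hphi (P n) $ i $ j) \<longlonglongrightarrow> Hphi x0 $ i $ j" if "P \<longlonglongrightarrow> x0" for P i j
    using that by (intro tendsto_vec_nth isCont_tendsto_compose[where g=Hphi])
  define t where "t n = min (r / 4) (inverse (real (Suc n)))" for n
  have t: "0 < t n" "2 * t n < r" for n using r by (auto simp: t_def)
  have t0: "(\<lambda>n. 2 * inverse (real (Suc n))) \<longlonglongrightarrow> 0"
    by (intro tendsto_mult_right_zero LIMSEQ_inverse_real_of_nat)
  have to_x0: "P \<longlonglongrightarrow> x0" if "\<And>n. dist (P n) x0 \<le> 2 * t n" for P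
  proof (rule tendsto_dist_iff[THEN iffD2], rule Lim_null_comparison[OF _ t0])
    show "\<forall>\<^sub>F n in sequentially. norm (dist (P n) x0) \<le> 2 * inverse (real (Suc n))"
    proof (intro always_eventually allI)
      fix n
      have "dist (P n) x0 \<le> 2 * t n" by (rule that)
      also have "\<dots> \<le> 2 * inverse (real (Suc n))" by (simp add: t_def)
      finally show "norm (dist (P n) x0) \<le> 2 * inverse (real (Suc n))" by simp
    qed
  qed
  have "Hphi x0 $ i $ j = Hphi x0 $ j $ i" for i j
  proof -
    have "\<exists>P Q. dist P x0 \<le> 2 * t n \<and> dist Q x0 \<le> 2 * t n \<and> Hphi P $ i $ j = Hphi Q $ j $ i" for n
      by (rule hessian_entries_swap_nearby[OF _ t(1) t(2)]) (rule der')
    then obtain P Q where P: "\<And>n. dist (P n) x0 \<le> 2 * t n" and Q: "\<And>n. dist (Q n) x0 \<le> 2 * t n"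
      and PQ: "\<And>n. Hphi (P n) $ i $ j = Hphi (Q n) $ j $ i" by metis
    have "(\<lambda>n. Hphi (P n) $ i $ j) \<longlonglongrightarrow> Hphi x0 $ i $ j"
      by (rule entry_lim, rule to_x0, rule P)
    moreover have "(\<lambda>n. Hphi (P n) $ i $ j) \<longlonglongrightarrow> Hphi x0 $ j $ i"
      unfolding PQ by (rule entry_lim, rule to_x0, rule Q)
    ultimately show ?thesis by (rule LIMSEQ_unique)
  qed
  then show ?thesis by (simp add: vec_eq_iff transpose_def)
qed

lemma local_min_second_derivative_nonneg:
  fixes \<psi> \<psi>' :: "real \<Rightarrow> real"
  assumes d: "0 < d" and min: "\<And>t. \<bar>t\<bar> < d \<Longrightarrow> \<psi> 0 \<le> \<psi> t"
    and der: "\<And>t. \<bar>t\<bar> < d \<Longrightarrow> (\<psi> has_real_derivative \<psi>' t) (at t)"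
    and der2: "(\<psi>' has_real_derivative L) (at 0)"
  shows "\<psi>' 0 = 0" and "0 \<le> L"
proof -
  show crit: "\<psi>' 0 = 0" by (rule DERIV_local_min[OF der[of 0] d]) (use d min in auto)
  show "0 \<le> L"
  proof (rule ccontr)
    assume "\<not> 0 \<le> L"
    then obtain e where e: "0 < e" and dec: "\<And>h. 0 < h \<Longrightarrow> h < e \<Longrightarrow> \<psi>' h < 0"
      using DERIV_neg_dec_right[OF der2] crit by force
    define t0 where "t0 = min e d / 2"
    have t0: "0 < t0" "t0 < e" "t0 < d" unfolding t0_def using e d by auto
    obtain \<xi> where \<xi>: "0 < \<xi>" "\<xi> < t0" and eq: "\<psi> t0 - \<psi> 0 = (t0 - 0) * \<psi>' \<xi>"
      using MVT2[OF t0(1), of \<psi> \<psi>'] der t0 by auto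
    have "t0 * \<psi>' \<xi> < 0" using dec[of \<xi>] \<xi> t0 by (simp add: mult_pos_neg)
    then show False using eq min[of t0] t0 by simp
  qed
qed

lemma line_segment_in_ball:
  fixes x v :: "'a::real_normed_vector"
  assumes "\<bar>t\<bar> < \<rho> / (norm v + 1)"
  shows "x + t *\<^sub>R v \<in> ball x \<rho>"
proof -
  have nv: "norm v + 1 > 0" by (simp add: add_nonneg_pos)
  have "\<bar>t\<bar> * norm v \<le> \<bar>t\<bar> * (norm v + 1)" by (simp add: mult_left_mono)
  also have "\<dots> < \<rho> / (norm v + 1) * (norm v + 1)" by (rule mult_strict_right_mono[OF assms nv])
  also have "\<dots> = \<rho>" using nv by simp
  finally show ?thesis by (simp add: dist_norm)
qed

lemma touching_from_above_derivatives:
  fixes w phi :: "real^'n \<Rightarrow> real"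
  assumes \<Omega>: "open \<Omega>" "x0 \<in> \<Omega>" and C2: "C2_near phi x0 Dphi Hphi"
    and touch: "\<exists>r>0. \<forall>y\<in>\<Omega> \<inter> ball x0 r. w y - phi y \<le> w x0 - phi x0"
    and wder: "\<And>y. (w has_derivative (\<lambda>v. G y \<bullet> v)) (at y)"
    and wder2: "\<And>v. ((\<lambda>t. G (x0 + t *\<^sub>R v) \<bullet> v) has_real_derivative q v) (at 0)"
  shows "Dphi x0 = G x0" and "\<And>v. q v \<le> v \<bullet> (Hphi x0 *v v)"
proof -
  obtain U where U: "open U" "x0 \<in> U"
    and der: "\<forall>y\<in>U. (phi has_derivative (\<lambda>v. Dphi y \<bullet> v)) (at y) \<and>
                (Dphi has_derivative (\<lambda>v. Hphi y *v v)) (at y)"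
    using C2 unfolding C2_near_def by blast
  obtain r where r: "0 < r" "\<forall>y\<in>\<Omega> \<inter> ball x0 r. w y - phi y \<le> w x0 - phi x0" using touch by blast
  have "open (U \<inter> \<Omega> \<inter> ball x0 r)" "x0 \<in> U \<inter> \<Omega> \<inter> ball x0 r" using U \<Omega> r(1) by auto
  then obtain \<rho> where \<rho>: "0 < \<rho>" "ball x0 \<rho> \<subseteq> U \<inter> \<Omega> \<inter> ball x0 r"
    using open_contains_ball by blast
  have along: "(Dphi x0 - G x0) \<bullet> v = 0 \<and> q v \<le> v \<bullet> (Hphi x0 *v v)" for v
  proof -
    define d where "d = \<rho> / (norm v + 1)"
    have d: "0 < d" unfolding d_def using \<rho> by (simp add: add_nonneg_pos)
    have inb: "x0 + t *\<^sub>R v \<in> ball x0 \<rho>" if "\<bar>t\<bar> < d" for t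
      using that unfolding d_def by (rule line_segment_in_ball)
    define \<psi> where "\<psi> t = phi (x0 + t *\<^sub>R v) - w (x0 + t *\<^sub>R v)" for t
    define \<psi>' where "\<psi>' t = Dphi (x0 + t *\<^sub>R v) \<bullet> v - G (x0 + t *\<^sub>R v) \<bullet> v" for t
    have "\<psi> 0 \<le> \<psi> t" if "\<bar>t\<bar> < d" for t
      using inb[OF that] \<rho> r(2) unfolding \<psi>_def by force
    moreover have "(\<psi> has_real_derivative \<psi>' t) (at t)" if "\<bar>t\<bar> < d" for t
      unfolding \<psi>_def \<psi>'_def
      using inb[OF that] \<rho> der wder by (intro DERIV_diff has_real_derivative_along_line) auto
    moreover have "(\<psi>' has_real_derivative ((Hphi x0 *v v) \<bullet> v - q v)) (at 0)"
      unfolding \<psi>'_def using der U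
      by (intro DERIV_diff has_real_derivative_matrix_along_line wder2) auto
    ultimately have "\<psi>' 0 = 0" and "0 \<le> (Hphi x0 *v v) \<bullet> v - q v"
      using local_min_second_derivative_nonneg[OF d] by blast+
    then show ?thesis unfolding \<psi>'_def by (simp add: inner_diff_left inner_diff_right inner_commute)
  qed
  have "(Dphi x0 - G x0) \<bullet> (Dphi x0 - G x0) = 0" using along by blast
  then show "Dphi x0 = G x0" by simp
  show "q v \<le> v \<bullet> (Hphi x0 *v v)" for v using along by blast
qed

section \<open>The radial profile\<close>

definition profile_density :: "real \<Rightarrow> real \<Rightarrow> real \<Rightarrow> real \<Rightarrow> real \<Rightarrow> real" where
  "profile_density k h lam r s = lam * (s + r^2) powr (-(k/2)) * exp (h * sqrt (s + r^2))"

definition profile_density_deriv :: "real \<Rightarrow> real \<Rightarrow> real \<Rightarrow> real \<Rightarrow> real \<Rightarrow> real" where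
  "profile_density_deriv k h lam r s =
     profile_density k h lam r s * (h / (2 * sqrt (s + r^2)) - k / (2 * (s + r^2)))"

text \<open>Any lower limit of integration below \<open>0\<close> would do: it only keeps \<open>s = 0\<close> in the interior
  of the domain where \<open>profile\<close> is differentiable.\<close>
definition profile :: "real \<Rightarrow> real \<Rightarrow> real \<Rightarrow> real \<Rightarrow> real \<Rightarrow> real \<Rightarrow> real" where
  "profile k h lam r R s = integral {-(r^2/2)..s} (profile_density k h lam r)
     - integral {-(r^2/2)..R^2} (profile_density k h lam r)"

lemma has_real_derivative_profile_density:
  assumes "0 < s + r^2"
  shows "(profile_density k h lam r has_real_derivative profile_density_deriv k h lam r s) (at s)"
proof -
  let ?t = "s + r^2"
  have lin: "((\<lambda>s. s + r^2) has_real_derivative 1) (at s)" by (auto intro!: derivative_eq_intros)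
  have g1: "((\<lambda>s. (s + r^2) powr (-(k/2))) has_real_derivative
      (-(k/2)) * ?t powr (-(k/2) - of_nat 1) * 1) (at s)"
    by (rule DERIV_fun_powr[OF lin]) (use assms in simp)
  have sq: "((\<lambda>s. sqrt (s + r^2)) has_real_derivative inverse (sqrt ?t) / 2 * 1) (at s)"
    by (rule DERIV_chain2[OF DERIV_real_sqrt[OF assms] lin])
  have g2: "((\<lambda>s. exp (h * sqrt (s + r^2))) has_real_derivative
      exp (h * sqrt ?t) * (h * (inverse (sqrt ?t) / 2 * 1))) (at s)"
    by (rule DERIV_chain2[OF DERIV_exp DERIV_cmult[OF sq]])
  have "((\<lambda>s. lam * (s + r^2) powr (-(k/2)) * exp (h * sqrt (s + r^2))) has_real_derivative
     lam * ((-(k/2)) * ?t powr (-(k/2) - of_nat 1) * 1) * exp (h * sqrt ?t) +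
     (exp (h * sqrt ?t) * (h * (inverse (sqrt ?t) / 2 * 1))) * (lam * ?t powr (-(k/2)))) (at s)"
    by (rule DERIV_mult[OF DERIV_cmult[OF g1, where c=lam] g2])
  moreover have "lam * ((-(k/2)) * ?t powr (-(k/2) - of_nat 1) * 1) * exp (h * sqrt ?t) +
     (exp (h * sqrt ?t) * (h * (inverse (sqrt ?t) / 2 * 1))) * (lam * ?t powr (-(k/2)))
      = profile_density_deriv k h lam r s"
  proof -
    have pw: "?t powr (-(k/2) - of_nat 1) = ?t powr (-(k/2)) / ?t" using assms by (simp add: powr_diff)
    have "sqrt ?t > 0" using assms by simp
    then show ?thesis
      unfolding profile_density_deriv_def profile_density_def pw using assms by (simp add: field_simps)
  qed
  ultimately show ?thesis unfolding profile_density_def[abs_def] by simp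
qed

lemma continuous_on_profile_density:
  assumes "-(r^2) < a"
  shows "continuous_on {a..b} (profile_density k h lam r)"
proof (rule continuous_at_imp_continuous_on, intro ballI)
  fix x assume "x \<in> {a..b}"
  then have "0 < x + r^2" using assms by simp
  then show "isCont (profile_density k h lam r) x"
    using has_real_derivative_profile_density DERIV_isCont by blast
qed

lemma profile_density_integrable:
  assumes "-(r^2) < a"
  shows "profile_density k h lam r integrable_on {a..b}"
  using continuous_on_profile_density[OF assms] by (rule integrable_continuous_real)

lemma profile_density_nonneg: "0 \<le> lam \<Longrightarrow> 0 \<le> profile_density k h lam r s"
  unfolding profile_density_def by simp

lemma has_real_derivative_profile:
  assumes r: "0 < r" and s: "0 \<le> s"
  shows "(profile k h lam r R has_real_derivative profile_density k h lam r s) (at s)"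
proof -
  have "0 < r^2" using r by simp
  then have a: "-(r^2) < -(r^2/2)" and sa: "-(r^2/2) < s" using s by linarith+
  have "((\<lambda>x. integral {-(r^2/2)..x} (profile_density k h lam r)) has_real_derivative
      profile_density k h lam r s) (at s within {-(r^2/2)..s + 1})"
    by (rule integral_has_real_derivative[OF continuous_on_profile_density[OF a]]) (use sa in simp)
  moreover have "at s within {-(r^2/2)..s + 1} = at s"
    by (rule at_within_interior) (use sa in simp)
  ultimately have "((\<lambda>x. integral {-(r^2/2)..x} (profile_density k h lam r)
      - integral {-(r^2/2)..R^2} (profile_density k h lam r))
      has_real_derivative profile_density k h lam r s - 0) (at s)"
    by (intro DERIV_diff DERIV_const) simp
  then show ?thesis unfolding profile_def[abs_def] by simp
qed

lemma profile_eq_neg_integral: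
  assumes r: "0 < r" and s: "0 \<le> s" "s \<le> R^2"
  shows "profile k h lam r R s = - integral {s..R^2} (profile_density k h lam r)"
proof -
  have "0 < r^2" using r by simp
  then have "-(r^2) < -(r^2/2)" "-(r^2/2) \<le> s" using s by linarith+
  then have "integral {-(r^2/2)..s} (profile_density k h lam r) + integral {s..R^2} (profile_density k h lam r)
      = integral {-(r^2/2)..R^2} (profile_density k h lam r)"
    using s by (intro Henstock_Kurzweil_Integration.integral_combine profile_density_integrable) auto
  then show ?thesis unfolding profile_def by simp
qed

lemma integral_profile_density_bounds:
  assumes r: "0 < r" and lam: "0 \<le> lam" and s: "0 \<le> s" "s \<le> R^2"
  shows "0 \<le> integral {s..R^2} (profile_density k h lam r)"
    and "integral {s..R^2} (profile_density k h lam r) \<le> integral {0..R^2} (profile_density k h lam r)"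
proof -
  have "0 < r^2" using r by simp
  then have int: "profile_density k h lam r integrable_on {c..d}" if "0 \<le> c" for c d
    using that by (intro profile_density_integrable) linarith
  have "integral {0..s} (profile_density k h lam r) + integral {s..R^2} (profile_density k h lam r) =
        integral {0..R^2} (profile_density k h lam r)"
    by (rule Henstock_Kurzweil_Integration.integral_combine) (use s int in auto)
  moreover have "0 \<le> integral {0..s} (profile_density k h lam r)"
    by (rule integral_nonneg) (use int profile_density_nonneg[OF lam] in auto)
  moreover show "0 \<le> integral {s..R^2} (profile_density k h lam r)"
    by (rule integral_nonneg) (use int s profile_density_nonneg[OF lam] in auto)
  ultimately show "integral {s..R^2} (profile_density k h lam r) \<le> integral {0..R^2} (profile_density k h lam r)"
    by linarith
qed

lemma profile_nonpos:
  assumes "0 < r" "0 \<le> lam" "0 \<le> s" "s \<le> R^2"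
  shows "profile k h lam r R s \<le> 0"
  using integral_profile_density_bounds(1)[OF assms] profile_eq_neg_integral[OF assms(1,3,4)] by simp

lemma profile_ge_integral:
  assumes h: "0 \<le> h" and r: "0 < r" "r \<le> R" and lam: "0 \<le> lam" and s: "0 \<le> s" "s \<le> R^2"
  shows "- (lam * exp (2 * (h * R)) * integral {0..R^2} (\<lambda>\<sigma>. (\<sigma> + r^2) powr (-(k/2))))
    \<le> profile k h lam r R s"
proof -
  have int: "profile_density k h' lam' r integrable_on {0..R^2}" for h' lam'
    using r by (intro profile_density_integrable) simp
  have "integral {0..R^2} (profile_density k h lam r)
      \<le> integral {0..R^2} (profile_density k 0 (lam * exp (2 * (h * R))) r)"
  proof (rule integral_le[OF int int])
    fix x assume x: "x \<in> {0..R^2}"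
    have "r^2 \<le> R^2" using r by (intro power_mono) auto
    then have "x + r^2 \<le> (2 * R)^2" using x by (simp add: power2_eq_square)
    then have "sqrt (x + r^2) \<le> sqrt ((2 * R)^2)" by (rule real_sqrt_le_mono)
    also have "\<dots> = 2 * R" using r by (intro real_sqrt_unique) auto
    finally have "h * sqrt (x + r^2) \<le> h * (2 * R)" using h by (rule mult_left_mono)
    then have "exp (h * sqrt (x + r^2)) \<le> exp (2 * (h * R))" by (simp add: mult_ac)
    then have "lam * (x + r^2) powr (-(k/2)) * exp (h * sqrt (x + r^2)) \<le>
        lam * (x + r^2) powr (-(k/2)) * exp (2 * (h * R))"
      using lam by (intro mult_left_mono) auto
    then show "profile_density k h lam r x \<le> profile_density k 0 (lam * exp (2 * (h * R))) r x"
      unfolding profile_density_def by (simp add: mult_ac)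
  qed
  also have "\<dots> = lam * exp (2 * (h * R)) * integral {0..R^2} (\<lambda>\<sigma>. (\<sigma> + r^2) powr (-(k/2)))"
    unfolding profile_density_def[abs_def] by simp
  finally show ?thesis
    using integral_profile_density_bounds(2)[OF r(1) lam s, of k h] profile_eq_neg_integral[OF r(1) s, of k h lam]
    by linarith
qed

lemma integral_eq_antiderivative_diff:
  fixes G g :: "real \<Rightarrow> real"
  assumes "a \<le> b" and "\<And>x. a \<le> x \<Longrightarrow> x \<le> b \<Longrightarrow> (G has_real_derivative g x) (at x)"
  shows "integral {a..b} g = G b - G a"
proof -
  have "(g has_integral G b - G a) {a..b}"
  proof (rule fundamental_theorem_of_calculus[OF assms(1)])
    fix x assume "x \<in> {a..b}"
    then have "(G has_real_derivative g x) (at x)" using assms(2) by auto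
    then show "(G has_vector_derivative g x) (at x within {a..b})"
      by (simp add: has_real_derivative_iff_has_vector_derivative has_vector_derivative_at_within)
  qed
  then show ?thesis by (rule integral_unique)
qed

lemma integral_shifted_powr:
  fixes e r a b :: real
  assumes r: "0 < r" and ab: "0 \<le> a" "a \<le> b" and e: "e \<noteq> -1"
  shows "integral {a..b} (\<lambda>\<sigma>. (\<sigma> + r^2) powr e)
    = ((b + r^2) powr (e + 1) - (a + r^2) powr (e + 1)) / (e + 1)"
proof -
  have "integral {a..b} (\<lambda>\<sigma>. (\<sigma> + r^2) powr e) =
     (b + r^2) powr (e + 1) / (e + 1) - (a + r^2) powr (e + 1) / (e + 1)"
  proof (rule integral_eq_antiderivative_diff[OF ab(2)])
    fix x assume x: "a \<le> x" "x \<le> b"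
    have pos: "0 < x + r^2" using x ab r by (simp add: add_nonneg_pos)
    have lin: "((\<lambda>s. s + r^2) has_real_derivative 1) (at x)" by (auto intro!: derivative_eq_intros)
    have "((\<lambda>s. (s + r^2) powr (e + 1)) has_real_derivative
        (e + 1) * (x + r^2) powr (e + 1 - of_nat 1) * 1) (at x)"
      by (rule DERIV_fun_powr[OF lin]) (use pos in simp)
    from DERIV_cdivide[OF this, of "e + 1"] e
    show "((\<lambda>s. (s + r^2) powr (e + 1) / (e + 1)) has_real_derivative (x + r^2) powr e) (at x)"
      by simp
  qed
  then show ?thesis by (simp add: diff_divide_distrib)
qed

lemma integral_shifted_inverse:
  fixes r a b :: real
  assumes r: "0 < r" and ab: "0 \<le> a" "a \<le> b"
  shows "integral {a..b} (\<lambda>\<sigma>. (\<sigma> + r^2) powr (-1)) = ln (b + r^2) - ln (a + r^2)"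
proof (rule integral_eq_antiderivative_diff[OF ab(2)])
  fix x assume x: "a \<le> x" "x \<le> b"
  have pos: "0 < x + r^2" using x ab r by (simp add: add_nonneg_pos)
  have lin: "((\<lambda>s. s + r^2) has_real_derivative 1) (at x)" by (auto intro!: derivative_eq_intros)
  have "((\<lambda>s. ln (s + r^2)) has_real_derivative 1 / (x + r^2)) (at x)"
    using DERIV_chain2[OF DERIV_ln_divide[OF pos] lin] by simp
  moreover have "(x + r^2) powr (-1) = 1 / (x + r^2)" using pos by (simp add: powr_minus divide_inverse)
  ultimately show "((\<lambda>s. ln (s + r^2)) has_real_derivative (x + r^2) powr (-1)) (at x)" by simp
qed

lemma scaled_profile_integral_le_k1:
  fixes r R :: real
  assumes r: "0 < r" "2 * r \<le> R"
  shows "(2 * r^2) powr (1/2) * integral {0..R^2} (\<lambda>\<sigma>. (\<sigma> + r^2) powr (-(1/2))) \<le> 8 * (R * r)"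
proof -
  have "integral {0..R^2} (\<lambda>\<sigma>. (\<sigma> + r^2) powr (-(1/2))) =
      ((R^2 + r^2) powr (-(1/2) + 1) - (0 + r^2) powr (-(1/2) + 1)) / (-(1/2) + 1)"
    by (rule integral_shifted_powr[OF r(1)]) auto
  also have "\<dots> = 2 * (sqrt (R^2 + r^2) - r)" using r by (simp add: powr_half_sqrt)
  finally have I: "integral {0..R^2} (\<lambda>\<sigma>. (\<sigma> + r^2) powr (-(1/2))) = 2 * (sqrt (R^2 + r^2) - r)" .
  have "r * r \<le> R * R" using r by (intro mult_mono) auto
  moreover have "0 \<le> R * R" by simp
  ultimately have "R^2 + r^2 \<le> (2 * R)^2" unfolding power2_eq_square by linarith
  then have "sqrt (R^2 + r^2) \<le> sqrt ((2 * R)^2)" by (rule real_sqrt_le_mono)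
  also have "sqrt ((2 * R)^2) = 2 * R" using r by (intro real_sqrt_unique) auto
  finally have I_le: "2 * (sqrt (R^2 + r^2) - r) \<le> 4 * R" using r by (smt (verit))
  have I_nonneg: "r \<le> sqrt (R^2 + r^2)"
    using r real_sqrt_le_mono[of "r^2" "R^2 + r^2"] by simp
  have A_le: "(2 * r^2) powr (1/2) \<le> 2 * r"
    using r by (simp add: powr_half_sqrt real_sqrt_mult real_sqrt_le_mono[of 2 4, simplified])
  have "(2 * r^2) powr (1/2) * (2 * (sqrt (R^2 + r^2) - r)) \<le> (2 * r) * (4 * R)"
    by (rule mult_mono[OF A_le I_le]) (use r I_nonneg in simp_all)
  then show ?thesis unfolding I by (simp add: mult.commute)
qed

lemma scaled_profile_integral_le_k2:
  fixes r R :: real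
  assumes r: "0 < r" "2 * r \<le> R"
  shows "(2 * r^2) powr (2/2) * integral {0..R^2} (\<lambda>\<sigma>. (\<sigma> + r^2) powr (-(2/2)))
    \<le> 6 * (r^2 * \<bar>ln (R / r)\<bar>)"
proof -
  define x where "x = R / r"
  have x2: "2 \<le> x" unfolding x_def using r by (simp add: field_simps)
  have "integral {0..R^2} (\<lambda>\<sigma>. (\<sigma> + r^2) powr (-1)) = ln (R^2 + r^2) - ln (0 + r^2)"
    by (rule integral_shifted_inverse[OF r(1)]) auto
  also have "\<dots> = ln ((R^2 + r^2) / r^2)"
    using r by (simp add: ln_div add_nonneg_pos)
  also have "(R^2 + r^2) / r^2 = x^2 + 1" unfolding x_def using r by (simp add: field_simps)
  also have "ln (x^2 + 1) \<le> ln (x^3)"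
  proof -
    have "4 \<le> x^2" using mult_mono[of 2 x 2 x] x2 by (simp add: power2_eq_square)
    then have "4 * 1 \<le> x^2 * (x - 1)" using x2 by (intro mult_mono) auto
    then have "x^2 + 1 \<le> x^3" by (simp add: power2_eq_square power3_eq_cube algebra_simps)
    then show ?thesis using x2 by (subst ln_le_cancel_iff) (auto simp: add_pos_nonneg)
  qed
  also have "\<dots> = 3 * \<bar>ln (R / r)\<bar>" using x2 unfolding x_def by (simp add: ln_realpow)
  finally show ?thesis using r by simp
qed

lemma scaled_profile_integral_le_k_ge3:
  fixes k :: nat and r R :: real
  assumes r: "0 < r" "2 * r \<le> R" and k: "3 \<le> k"
  shows "(2 * r^2) powr (real k/2) * integral {0..R^2} (\<lambda>\<sigma>. (\<sigma> + r^2) powr (-(real k/2)))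
     \<le> 2 * 2 powr (real k / 2) / (real k - 2) * r^2"
proof -
  define e where "e = -(real k/2)"
  have e1: "e + 1 < 0" unfolding e_def using k by simp
  have "integral {0..R^2} (\<lambda>\<sigma>. (\<sigma> + r^2) powr e) =
      ((R^2 + r^2) powr (e + 1) - (r^2) powr (e + 1)) / (e + 1)"
    using integral_shifted_powr[OF r(1), of 0 "R^2" e] e1 by simp
  also have "\<dots> = ((r^2) powr (e + 1) - (R^2 + r^2) powr (e + 1)) / (-(e + 1))"
    by (metis minus_diff_eq minus_divide_divide)
  also have "\<dots> \<le> (r^2) powr (e + 1) / (-(e + 1))"
    using e1 by (intro divide_right_mono) auto
  finally have "(2 * r^2) powr (real k/2) * integral {0..R^2} (\<lambda>\<sigma>. (\<sigma> + r^2) powr e) \<le>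
      (2 * r^2) powr (real k/2) * ((r^2) powr (e + 1) / (-(e + 1)))"
    by (rule mult_left_mono) simp
  also have "\<dots> = 2 powr (real k / 2) * ((r^2) powr (real k/2) * (r^2) powr (e + 1)) / (-(e + 1))"
    using r by (simp add: powr_mult)
  also have "(r^2) powr (real k/2) * (r^2) powr (e + 1) = r^2"
    using r unfolding e_def by (simp add: powr_add[symmetric])
  also have "-(e + 1) = (real k - 2) / 2" unfolding e_def by simp
  finally show ?thesis unfolding e_def by (simp add: field_simps)
qed

definition gauge_constant :: "nat \<Rightarrow> real \<Rightarrow> real" where
  "gauge_constant k a =
     (if k = 1 then 8 * exp (2 * a) / (1 - a)
      else if k = 2 then 6 * exp (2 * a) / (2 - a)
      else 2 * 2 powr (real k / 2) * exp (2 * a) / ((real k - a) * (real k - 2)))"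

lemma gauge_constant_pos:
  fixes k :: nat
  assumes "1 \<le> k" "a < real k" "0 \<le> a"
  shows "0 < gauge_constant k a"
proof -
  consider "k = 1" | "k = 2" | "3 \<le> k" using assms by linarith
  then show ?thesis
  proof cases
    case 3
    then have "(real k - a) * (real k - 2) > 0" using assms by simp
    then show ?thesis using 3 unfolding gauge_constant_def by simp
  qed (use assms in \<open>simp_all add: gauge_constant_def\<close>)
qed

lemma Psi_gauge_nonneg: "0 \<le> r \<Longrightarrow> 0 < R \<Longrightarrow> 0 \<le> Psi_gauge k R r"
  unfolding Psi_gauge_def by auto

definition profile_scale :: "nat \<Rightarrow> real \<Rightarrow> real \<Rightarrow> real" where
  "profile_scale k a r = (2 * r^2) powr (real k / 2) / (real k - a)"

lemma profile_ge_neg_gauge: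
  fixes k :: nat
  assumes k: "1 \<le> k" and h: "0 \<le> h" and R: "0 < R" "h * R < real k"
    and r: "0 < r" "2 * r \<le> R" and s: "0 \<le> s" "s \<le> R^2"
  shows "- (gauge_constant k (h * R) * Psi_gauge k R r) \<le> profile k h (profile_scale k (h * R) r) r R s"
proof -
  define E where "E = exp (2 * (h * R)) / (real k - h * R)"
  define I where "I = integral {0..R^2} (\<lambda>\<sigma>. (\<sigma> + r^2) powr (-(real k/2)))"
  define A where "A = (2 * r^2) powr (real k / 2)"
  have E: "0 \<le> E" unfolding E_def using R by simp
  obtain X where X: "A * I \<le> X" "E * X = gauge_constant k (h * R) * Psi_gauge k R r"
  proof -
    consider "k = 1" | "k = 2" | "3 \<le> k" using k by linarith
    then show thesis
    proof cases
      case 1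
      show thesis
        by (rule that[of "8 * (R * r)"])
          (use scaled_profile_integral_le_k1[OF r] 1 in \<open>simp_all add: A_def I_def E_def
            gauge_constant_def Psi_gauge_def\<close>)
    next
      case 2
      show thesis
        by (rule that[of "6 * (r^2 * \<bar>ln (R / r)\<bar>)"])
          (use scaled_profile_integral_le_k2[OF r] 2 r in \<open>simp_all add: A_def I_def E_def
            gauge_constant_def Psi_gauge_def\<close>)
    next
      case 3
      show thesis
        by (rule that[of "2 * 2 powr (real k / 2) / (real k - 2) * r^2"])
          (use scaled_profile_integral_le_k_ge3[OF r 3] 3 in \<open>simp_all add: A_def I_def E_def
            gauge_constant_def Psi_gauge_def\<close>)
    qed
  qed
  have "profile_scale k (h * R) r * exp (2 * (h * R)) * I = E * (A * I)"
    unfolding profile_scale_def E_def A_def by simp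
  also have "\<dots> \<le> gauge_constant k (h * R) * Psi_gauge k R r"
    using mult_left_mono[OF X(1) E] X(2) by simp
  finally show ?thesis
    using profile_ge_integral[OF h r(1) _ _ s, of "profile_scale k (h * R) r" "real k"] r R
    unfolding I_def profile_scale_def by simp
qed

text \<open>For \<open>w(y) = F(|y - c|\<^sup>2)\<close> with \<open>s = |y - c|\<^sup>2\<close>, \<open>p = F'(s) \<ge> 0\<close> and \<open>q = F''(s)\<close>, this
  bounds from below the contribution of \<open>w\<close> to \<open>P\<^sub>k\<^sup>-(D\<^sup>2w) - h |Dw|\<close>.\<close>
definition radial_margin :: "real \<Rightarrow> real \<Rightarrow> real \<Rightarrow> real \<Rightarrow> real \<Rightarrow> real" where
  "radial_margin k h p q s = 2 * k * p - 4 * s * max (- q) 0 - 2 * h * sqrt s * p"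

lemma radial_margin_ge:
  fixes p s h r k :: real
  assumes p: "0 \<le> p" and s: "0 \<le> s" and h: "0 \<le> h" and r: "0 < r" and kh: "0 \<le> k - h * sqrt s"
  shows "2 * p * r^2 * (k - h * sqrt s) / (s + r^2) \<le>
    radial_margin k h p (p * (h / (2 * sqrt (s + r^2)) - k / (2 * (s + r^2)))) s"
proof -
  define t where "t = s + r^2"
  define \<sigma> where "\<sigma> = sqrt s"
  define u where "u = sqrt t"
  have t: "0 < t" "r^2 \<le> t" unfolding t_def using s r by (auto simp: add_nonneg_pos)
  have \<sigma>: "0 \<le> \<sigma>" "\<sigma>^2 = s" "\<sigma> \<le> u" unfolding \<sigma>_def u_def t_def using s by auto
  have u: "0 < u" "u^2 = t" unfolding u_def using t by auto
  have kh': "0 \<le> k - h * \<sigma>" using kh unfolding \<sigma>_def .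
  show ?thesis
  proof (cases "h / (2 * u) - k / (2 * t) \<ge> 0")
    case True
    then have m: "max (- (p * (h / (2 * u) - k / (2 * t)))) 0 = 0" using p by simp
    have "2 * p * r^2 * (k - h * \<sigma>) / t = (2 * p * (k - h * \<sigma>)) * (r^2 / t)" by simp
    also have "\<dots> \<le> (2 * p * (k - h * \<sigma>)) * 1"
      using p kh' t by (intro mult_left_mono) auto
    also have "\<dots> = 2 * k * p - 4 * s * 0 - 2 * h * \<sigma> * p" by (simp add: algebra_simps)
    finally have F: "2 * p * r^2 * (k - h * \<sigma>) / t \<le> 2 * k * p - 4 * s * 0 - 2 * h * \<sigma> * p" .
    show ?thesis
      unfolding radial_margin_def t_def[symmetric] u_def[symmetric] \<sigma>_def[symmetric] m by (rule F)
  next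
    case False
    then have "0 \<le> - (p * (h / (2 * u) - k / (2 * t)))" using p by (simp add: mult_le_0_iff)
    then have m: "max (- (p * (h / (2 * u) - k / (2 * t)))) 0 = p * (k / (2 * t) - h / (2 * u))"
      by (simp add: algebra_simps)
    have "k * t - s * (k - h * u) - h * \<sigma> * t = k * r^2 + h * \<sigma> * (\<sigma> * u - \<sigma>^2 - r^2)"
      unfolding t_def \<sigma>(2)[symmetric] by (simp add: algebra_simps power2_eq_square)
    moreover have "h * \<sigma> * (-(r^2)) \<le> h * \<sigma> * (\<sigma> * u - \<sigma>^2 - r^2)"
      using h \<sigma> by (intro mult_left_mono) (auto simp: power2_eq_square mult_left_mono)
    ultimately have key: "r^2 * (k - h * \<sigma>) \<le> k * t - s * (k - h * u) - h * \<sigma> * t"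
      by (simp add: algebra_simps)
    have "2 * p * r^2 * (k - h * \<sigma>) / t = (2 * p / t) * (r^2 * (k - h * \<sigma>))" by simp
    also have "\<dots> \<le> (2 * p / t) * (k * t - s * (k - h * u) - h * \<sigma> * t)"
      by (rule mult_left_mono[OF key]) (use p t in simp)
    also have "\<dots> = 2 * k * p - 4 * s * (p * (k / (2 * t) - h / (2 * u))) - 2 * h * \<sigma> * p"
      using t u by (simp add: field_simps power2_eq_square)
    finally have F: "2 * p * r^2 * (k - h * \<sigma>) / t
        \<le> 2 * k * p - 4 * s * (p * (k / (2 * t) - h / (2 * u))) - 2 * h * \<sigma> * p" .
    show ?thesis
      unfolding radial_margin_def t_def[symmetric] u_def[symmetric] \<sigma>_def[symmetric] m by (rule F)
  qed
qed

lemma profile_density_ge_inverse: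
  assumes r: "0 < r" and s: "0 \<le> s" "s < r^2" and k: "0 < k" and c: "0 < c" and h: "0 \<le> h"
  shows "1 / c \<le> profile_density k h ((2 * r^2) powr (k / 2) / c) r s"
proof -
  have t: "0 < s + r^2" "s + r^2 \<le> 2 * r^2" using s r by (auto simp: add_nonneg_pos)
  have "1 = (2 * r^2) powr (k / 2) * (2 * r^2) powr (-(k/2))"
    using r by (simp add: powr_add[symmetric])
  also have "\<dots> \<le> (2 * r^2) powr (k / 2) * (s + r^2) powr (-(k/2))"
    using t k by (intro mult_left_mono powr_mono2') auto
  also have "\<dots> \<le> (2 * r^2) powr (k / 2) * (s + r^2) powr (-(k/2)) * exp (h * sqrt (s + r^2))"
    using mult_left_mono[of 1 "exp (h * sqrt (s + r^2))" "(2 * r^2) powr (k / 2) * (s + r^2) powr (-(k/2))"] h t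
    by (simp add: zero_le_mult_iff)
  finally show ?thesis unfolding profile_density_def using c by (simp add: field_simps)
qed

lemma radial_margin_profile_nonneg:
  fixes k :: nat
  assumes h: "0 \<le> h" and R: "0 < R" "h * R < real k" and r: "0 < r" and s: "0 \<le> s" "s \<le> R^2"
  defines "lam \<equiv> profile_scale k (h * R) r"
  shows "0 \<le> radial_margin k h (profile_density k h lam r s) (profile_density_deriv k h lam r s) s"
proof -
  have "sqrt s \<le> sqrt (R^2)" using s by (intro real_sqrt_le_mono)
  then have "sqrt s \<le> R" using R by simp
  then have kh: "0 \<le> k - h * sqrt s" using h R mult_left_mono[of "sqrt s" R h] by linarith
  have p: "0 \<le> profile_density k h lam r s"
    unfolding lam_def profile_scale_def using R by (intro profile_density_nonneg) simp
  then have "0 \<le> 2 * profile_density k h lam r s * r^2 * (k - h * sqrt s) / (s + r^2)"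
    using kh s r by (simp add: add_nonneg_pos)
  also have "\<dots> \<le> radial_margin k h (profile_density k h lam r s) (profile_density_deriv k h lam r s) s"
    unfolding profile_density_deriv_def by (rule radial_margin_ge[OF p s(1) h r kh])
  finally show ?thesis .
qed

lemma radial_margin_profile_ge_1:
  fixes k :: nat
  assumes k: "1 \<le> k" and h: "0 \<le> h" and R: "0 < R" "h * R < real k"
    and r: "0 < r" "r \<le> R" and s: "0 \<le> s" "s < r^2"
  defines "lam \<equiv> profile_scale k (h * R) r"
  shows "1 \<le> radial_margin k h (profile_density k h lam r s) (profile_density_deriv k h lam r s) s"
proof -
  define P where "P = profile_density k h lam r s"
  have c: "0 < real k - h * R" using R by simp
  have "r^2 \<le> R^2" using r by (intro power_mono) auto
  then have "sqrt s \<le> R" using s R real_sqrt_le_mono[of s "R^2"] by simp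
  then have kh: "k - h * R \<le> k - h * sqrt s" using h mult_left_mono by auto
  have P1: "1 / (real k - h * R) \<le> P"
    unfolding P_def lam_def profile_scale_def
    by (rule profile_density_ge_inverse[OF r(1) s _ c h]) (use k in simp)
  have P0: "0 \<le> P" using P1 c by (smt (verit) divide_pos_pos)
  have t: "0 < s + r^2" "s + r^2 \<le> 2 * r^2" using s r by (auto simp: add_nonneg_pos)
  have "1 \<le> P * (k - h * R)" using P1 c by (simp add: field_simps)
  also have "\<dots> \<le> 2 * P * r^2 * (k - h * sqrt s) / (s + r^2)"
  proof -
    have "P * (k - h * R) * (s + r^2) \<le> P * (k - h * R) * (2 * r^2)"
      using t P0 c by (intro mult_left_mono) auto
    also have "\<dots> \<le> P * (k - h * sqrt s) * (2 * r^2)"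
      using P0 kh by (intro mult_right_mono mult_left_mono) auto
    finally show ?thesis using t by (simp add: field_simps)
  qed
  also have "\<dots> \<le> radial_margin k h P (profile_density_deriv k h lam r s) s"
    unfolding profile_density_deriv_def P_def
    by (rule radial_margin_ge) (use P0 s h r kh c in \<open>auto simp: P_def\<close>)
  finally show ?thesis unfolding P_def .
qed

section \<open>Sums of radial functions\<close>

lemma has_derivative_inner_self_diff:
  fixes c y :: "'a::real_inner"
  shows "((\<lambda>y. (y - c) \<bullet> (y - c)) has_derivative (\<lambda>v. 2 * ((y - c) \<bullet> v))) (at y)"
proof -
  have "((\<lambda>y. (y - c) \<bullet> (y - c)) has_derivative (\<lambda>v. (y - c) \<bullet> v + v \<bullet> (y - c))) (at y)"
    by (auto intro!: derivative_eq_intros)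
  then show ?thesis by (simp add: inner_commute)
qed

lemma has_derivative_radial_sum:
  fixes c :: "'j \<Rightarrow> 'a::real_inner"
  assumes dF: "\<And>j s. j \<in> J \<Longrightarrow> 0 \<le> s \<Longrightarrow> (F j has_real_derivative F' j s) (at s)"
  shows "((\<lambda>x. e + (\<Sum>j\<in>J. F j ((x - c j) \<bullet> (x - c j)))) has_derivative
          (\<lambda>v. (\<Sum>j\<in>J. (2 * F' j ((y - c j) \<bullet> (y - c j))) *\<^sub>R (y - c j)) \<bullet> v)) (at y)"
proof -
  have "((\<lambda>x. F j ((x - c j) \<bullet> (x - c j))) has_derivative
        (\<lambda>v. F' j ((y - c j) \<bullet> (y - c j)) * (2 * ((y - c j) \<bullet> v)))) (at y)" if "j \<in> J" for j
  proof -
    have "(F j has_derivative (\<lambda>u. F' j ((y - c j) \<bullet> (y - c j)) * u)) (at ((y - c j) \<bullet> (y - c j)))"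
      using dF[OF that, of "(y - c j) \<bullet> (y - c j)"] by (simp add: has_field_derivative_def)
    from has_derivative_compose[OF has_derivative_inner_self_diff this] show ?thesis .
  qed
  then have "((\<lambda>x. e + (\<Sum>j\<in>J. F j ((x - c j) \<bullet> (x - c j)))) has_derivative
        (\<lambda>v. 0 + (\<Sum>j\<in>J. F' j ((y - c j) \<bullet> (y - c j)) * (2 * ((y - c j) \<bullet> v))))) (at y)"
    by (intro has_derivative_add has_derivative_const has_derivative_sum)
  then show ?thesis by (simp add: inner_sum_left mult_ac)
qed

lemma has_real_derivative_radial_gradient:
  fixes c :: "'j \<Rightarrow> 'a::real_inner"
  assumes dF': "\<And>j s. j \<in> J \<Longrightarrow> 0 \<le> s \<Longrightarrow> (F' j has_real_derivative F'' j s) (at s)"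
  shows "((\<lambda>t. (\<Sum>j\<in>J. (2 * F' j ((x + t *\<^sub>R v - c j) \<bullet> (x + t *\<^sub>R v - c j))) *\<^sub>R (x + t *\<^sub>R v - c j)) \<bullet> v)
     has_real_derivative
     (\<Sum>j\<in>J. 4 * F'' j ((x - c j) \<bullet> (x - c j)) * ((x - c j) \<bullet> v)^2
        + 2 * F' j ((x - c j) \<bullet> (x - c j)) * (v \<bullet> v))) (at 0)"
proof -
  have "((\<lambda>t. 2 * F' j ((x + t *\<^sub>R v - c j) \<bullet> (x + t *\<^sub>R v - c j)) * ((x + t *\<^sub>R v - c j) \<bullet> v))
     has_real_derivative
     4 * F'' j ((x - c j) \<bullet> (x - c j)) * ((x - c j) \<bullet> v)^2 + 2 * F' j ((x - c j) \<bullet> (x - c j)) * (v \<bullet> v))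
     (at 0)" if j: "j \<in> J" for j
  proof -
    define z where "z = x - c j"
    have sq: "(x + t *\<^sub>R v - c j) \<bullet> (x + t *\<^sub>R v - c j) = z \<bullet> z + 2 * t * (z \<bullet> v) + t^2 * (v \<bullet> v)" for t
      unfolding z_def
      by (simp add: algebra_simps inner_add_left inner_add_right inner_diff_left inner_diff_right
          inner_commute power2_eq_square)
    have lin: "(x + t *\<^sub>R v - c j) \<bullet> v = z \<bullet> v + t * (v \<bullet> v)" for t
      unfolding z_def by (simp add: algebra_simps inner_add_left inner_diff_left)
    have q: "((\<lambda>t. z \<bullet> z + 2 * t * (z \<bullet> v) + t^2 * (v \<bullet> v)) has_real_derivative 2 * (z \<bullet> v)) (at 0)"
      by (auto intro!: derivative_eq_intros)
    have f: "((\<lambda>t. F' j (z \<bullet> z + 2 * t * (z \<bullet> v) + t^2 * (v \<bullet> v))) has_real_derivative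
             F'' j (z \<bullet> z) * (2 * (z \<bullet> v))) (at 0)"
      using DERIV_chain2[OF _ q, of "F' j" "F'' j (z \<bullet> z)"] dF'[OF j, of "z \<bullet> z"] by simp
    have g: "((\<lambda>t. z \<bullet> v + t * (v \<bullet> v)) has_real_derivative v \<bullet> v) (at 0)"
      by (auto intro!: derivative_eq_intros)
    have "((\<lambda>t. 2 * F' j (z \<bullet> z + 2 * t * (z \<bullet> v) + t^2 * (v \<bullet> v)) * (z \<bullet> v + t * (v \<bullet> v)))
       has_real_derivative 2 * (F'' j (z \<bullet> z) * (2 * (z \<bullet> v))) * (z \<bullet> v + 0 * (v \<bullet> v))
         + (v \<bullet> v) * (2 * F' j (z \<bullet> z + 2 * 0 * (z \<bullet> v) + 0^2 * (v \<bullet> v)))) (at 0)"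
      by (rule DERIV_mult[OF DERIV_cmult[OF f] g])
    then show ?thesis unfolding sq lin z_def[symmetric] by (simp add: power2_eq_square mult_ac)
  qed
  then have "((\<lambda>t. \<Sum>j\<in>J. 2 * F' j ((x + t *\<^sub>R v - c j) \<bullet> (x + t *\<^sub>R v - c j)) * ((x + t *\<^sub>R v - c j) \<bullet> v))
     has_real_derivative
     (\<Sum>j\<in>J. 4 * F'' j ((x - c j) \<bullet> (x - c j)) * ((x - c j) \<bullet> v)^2
        + 2 * F' j ((x - c j) \<bullet> (x - c j)) * (v \<bullet> v))) (at 0)"
    by (rule DERIV_sum)
  then show ?thesis by (simp add: inner_sum_left)
qed

lemma norm_radial_gradient_le:
  fixes c :: "'j \<Rightarrow> 'a::real_inner"
  assumes "\<And>j. j \<in> J \<Longrightarrow> 0 \<le> p j"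
  shows "norm (\<Sum>j\<in>J. (2 * p j) *\<^sub>R (x - c j)) \<le> (\<Sum>j\<in>J. 2 * p j * sqrt ((x - c j) \<bullet> (x - c j)))"
proof -
  have "norm (\<Sum>j\<in>J. (2 * p j) *\<^sub>R (x - c j)) \<le> (\<Sum>j\<in>J. norm ((2 * p j) *\<^sub>R (x - c j)))"
    by (rule norm_sum)
  also have "\<dots> = (\<Sum>j\<in>J. 2 * p j * sqrt ((x - c j) \<bullet> (x - c j)))"
  proof (rule sum.cong[OF refl])
    fix j assume "j \<in> J"
    then show "norm ((2 * p j) *\<^sub>R (x - c j)) = 2 * p j * sqrt ((x - c j) \<bullet> (x - c j))"
      using assms unfolding norm_scaleR by (simp add: norm_eq_sqrt_inner[of "x - c j"])
  qed
  finally show ?thesis .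
qed

text \<open>The Hessian of \<open>F(|x - c|\<^sup>2)\<close> is \<open>2F' I + 4F'' (x - c)(x - c)\<^sup>T \<ge> 2F' I - 4 max(-F'', 0) (x - c)(x - c)\<^sup>T\<close>,
  so Ky Fan's bound applies with \<open>a = \<Sum> 2F'\<close> and \<open>b\<^sub>j = 4 max(-F''\<^sub>j, 0)\<close>.\<close>
lemma Pk_minus_touching_radial_sum_ge:
  fixes phi w :: "real^'n \<Rightarrow> real" and c :: "'j \<Rightarrow> real^'n"
  assumes \<Omega>: "open \<Omega>" "x0 \<in> \<Omega>" and C2: "C2_near phi x0 Dphi Hphi"
    and touch: "\<exists>r>0. \<forall>y\<in>\<Omega> \<inter> ball x0 r. w y - phi y \<le> w x0 - phi x0"
    and w: "\<And>x. w x = e + (\<Sum>j\<in>J. F j ((x - c j) \<bullet> (x - c j)))"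
    and dF: "\<And>j s. j \<in> J \<Longrightarrow> 0 \<le> s \<Longrightarrow> (F j has_real_derivative F' j s) (at s)"
    and dF': "\<And>j s. j \<in> J \<Longrightarrow> 0 \<le> s \<Longrightarrow> (F' j has_real_derivative F'' j s) (at s)"
    and F'_nonneg: "\<And>j s. j \<in> J \<Longrightarrow> 0 \<le> s \<Longrightarrow> 0 \<le> F' j s"
    and k: "k \<le> CARD('n)" and h: "0 \<le> h"
  shows "(\<Sum>j\<in>J. radial_margin k h (F' j ((x0 - c j) \<bullet> (x0 - c j))) (F'' j ((x0 - c j) \<bullet> (x0 - c j)))
      ((x0 - c j) \<bullet> (x0 - c j))) \<le> Pk_minus k (Hphi x0) - h * norm (Dphi x0)"
proof -
  define s where "s j = (x0 - c j) \<bullet> (x0 - c j)" for j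
  define G where "G y = (\<Sum>j\<in>J. (2 * F' j ((y - c j) \<bullet> (y - c j))) *\<^sub>R (y - c j))" for y
  define q where "q v = (\<Sum>j\<in>J. 4 * F'' j (s j) * ((x0 - c j) \<bullet> v)^2 + 2 * F' j (s j) * (v \<bullet> v))" for v
  have "w = (\<lambda>x. e + (\<Sum>j\<in>J. F j ((x - c j) \<bullet> (x - c j))))" using w by (rule ext)
  then have "(w has_derivative (\<lambda>v. G y \<bullet> v)) (at y)" for y
    unfolding G_def by (simp only: has_derivative_radial_sum[OF dF])
  moreover have "((\<lambda>t. G (x0 + t *\<^sub>R v) \<bullet> v) has_real_derivative q v) (at 0)" for v
    unfolding G_def q_def s_def by (rule has_real_derivative_radial_gradient[OF dF'])
  ultimately have grad: "Dphi x0 = G x0" and hess: "\<And>v. q v \<le> v \<bullet> (Hphi x0 *v v)"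
    using touching_from_above_derivatives[OF \<Omega> C2 touch] by blast+
  define a where "a = (\<Sum>j\<in>J. 2 * F' j (s j))"
  define b where "b j = 4 * max (- F'' j (s j)) 0" for j
  have quad: "a * (v \<bullet> v) - (\<Sum>j\<in>J. b j * ((x0 - c j) \<bullet> v)^2) \<le> v \<bullet> (Hphi x0 *v v)" for v
  proof -
    have "a * (v \<bullet> v) - (\<Sum>j\<in>J. b j * ((x0 - c j) \<bullet> v)^2) =
          (\<Sum>j\<in>J. 2 * F' j (s j) * (v \<bullet> v) - b j * ((x0 - c j) \<bullet> v)^2)"
      unfolding a_def by (simp add: sum_distrib_right sum_subtractf)
    also have "\<dots> \<le> q v" unfolding q_def b_def
      by (intro sum_mono) (auto intro: mult_right_mono simp: max_def)
    finally show ?thesis using hess[of v] by linarith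
  qed
  have "real k * a - (\<Sum>j\<in>J. b j * ((x0 - c j) \<bullet> (x0 - c j))) \<le> Pk_minus k (Hphi x0)"
    using Pk_minus_ge_if_quadratic_form_ge[OF C2_near_hessian_symmetric[OF C2] k _ quad]
    unfolding b_def by simp
  moreover have "h * norm (Dphi x0) \<le> h * (\<Sum>j\<in>J. 2 * F' j (s j) * sqrt (s j))"
    unfolding grad G_def s_def using F'_nonneg
    by (intro mult_left_mono[OF _ h] norm_radial_gradient_le) simp
  moreover have "(\<Sum>j\<in>J. radial_margin k h (F' j (s j)) (F'' j (s j)) (s j)) =
      real k * a - (\<Sum>j\<in>J. b j * ((x0 - c j) \<bullet> (x0 - c j))) - h * (\<Sum>j\<in>J. 2 * F' j (s j) * sqrt (s j))"
    unfolding radial_margin_def a_def b_def s_def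
    by (simp add: sum_subtractf sum_distrib_left sum_distrib_right mult_ac)
  ultimately show ?thesis unfolding s_def by linarith
qed

section \<open>A subsolution on a union of small balls\<close>

lemma usc_on_continuous:
  assumes "\<And>x. isCont w x"
  shows "usc_on S w"
  unfolding usc_on_def
proof (intro ballI allI impI)
  fix x a assume "x \<in> S" "w x < a"
  then obtain d where d: "0 < d" "\<And>y. dist y x < d \<Longrightarrow> dist (w y) (w x) < a - w x"
    using assms[of x] unfolding continuous_at_eps_delta by (metis diff_gt_0_iff_gt)
  then show "\<exists>e>0. \<forall>y\<in>S. dist y x < e \<longrightarrow> w y < a"
    by (auto simp: dist_real_def abs_less_iff)
qed

locale small_ball_cover =
  fixes k :: nat and h R :: real and E :: "(real^'n) set"
    and J :: "'j set" and x :: "'j \<Rightarrow> real^'n" and r :: "'j \<Rightarrow> real"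
  assumes k: "1 \<le> k" "k \<le> CARD('n)" and h: "0 \<le> h" and R: "0 < R" "h * R < real k"
    and bounded: "bounded E" and finite: "finite J"
    and r_pos: "\<And>j. j \<in> J \<Longrightarrow> 0 < r j"
    and r_small: "\<And>j. j \<in> J \<Longrightarrow> 4 * r j \<le> R - diameter E"
    and meets: "\<And>j. j \<in> J \<Longrightarrow> \<exists>e\<in>E. dist e (x j) < r j"
    and covers: "E \<subseteq> (\<Union>j\<in>J. ball (x j) (r j))"
begin

definition balls :: "(real^'n) set" where
  "balls = (\<Union>j\<in>J. ball (x j) (r j))"

definition gauge_sum :: real where
  "gauge_sum = (\<Sum>j\<in>J. Psi_gauge k R (r j))"

definition subsolution :: "real \<Rightarrow> real^'n \<Rightarrow> real" where
  "subsolution \<epsilon> y = -\<epsilon> + (\<Sum>j\<in>J. profile k h (profile_scale k (h * R) (r j)) (r j) R ((y - x j) \<bullet> (y - x j)))"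

abbreviation K :: real where
  "K \<equiv> gauge_constant k (h * R)"

lemma profile_scale_nonneg: "0 \<le> profile_scale k (h * R) \<rho>"
  unfolding profile_scale_def using R(2) by (intro divide_nonneg_pos) auto

lemma two_r_le_R: "j \<in> J \<Longrightarrow> 2 * r j \<le> R"
  using r_small r_pos diameter_ge_0[OF bounded] by (smt (verit))

lemma dist_centre_le:
  assumes "y \<in> balls" "j \<in> J"
  shows "dist y (x j) \<le> R"
proof -
  obtain i where i: "i \<in> J" "dist y (x i) < r i" using assms(1) unfolding balls_def by (auto simp: dist_commute)
  obtain ei where ei: "ei \<in> E" "dist ei (x i) < r i" using meets[OF i(1)] by blast
  obtain ej where ej: "ej \<in> E" "dist ej (x j) < r j" using meets[OF assms(2)] by blast
  have "dist y (x j) \<le> dist y (x i) + dist ei (x i) + dist ei ej + dist ej (x j)"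
    by (smt (verit) dist_commute dist_triangle)
  also have "\<dots> \<le> r i + r i + diameter E + r j"
    using i ei ej diameter_bounded_bound[OF bounded ei(1) ej(1)] by linarith
  also have "\<dots> \<le> R" using r_small[OF i(1)] r_small[OF assms(2)] r_pos[OF i(1)] r_pos[OF assms(2)] by linarith
  finally show ?thesis .
qed

lemma dist_centre_le_closure:
  assumes "y \<in> closure balls" "j \<in> J"
  shows "dist y (x j) \<le> R"
proof -
  have "balls \<subseteq> cball (x j) R" using dist_centre_le[OF _ assms(2)] by (auto simp: dist_commute)
  then have "closure balls \<subseteq> cball (x j) R" by (simp add: closure_minimal)
  then show ?thesis using assms(1) by (auto simp: dist_commute)
qed

lemma sq_dist_le: "dist y (x j) \<le> R \<Longrightarrow> (y - x j) \<bullet> (y - x j) \<le> R^2"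
  by (simp add: dist_norm power2_norm_eq_inner[symmetric] power_mono)

lemma subsolution_neg:
  assumes "0 < \<epsilon>" "y \<in> closure balls"
  shows "subsolution \<epsilon> y < 0"
proof -
  have "(\<Sum>j\<in>J. profile k h (profile_scale k (h * R) (r j)) (r j) R ((y - x j) \<bullet> (y - x j))) \<le> 0"
    using dist_centre_le_closure[OF assms(2)] sq_dist_le r_pos profile_scale_nonneg
    by (intro sum_nonpos profile_nonpos) auto
  then show ?thesis unfolding subsolution_def using assms(1) by linarith
qed

lemma subsolution_ge:
  assumes "y \<in> balls"
  shows "-(\<epsilon> + K * gauge_sum) \<le> subsolution \<epsilon> y"
proof -
  have "(\<Sum>j\<in>J. -(K * Psi_gauge k R (r j)))
      \<le> (\<Sum>j\<in>J. profile k h (profile_scale k (h * R) (r j)) (r j) R ((y - x j) \<bullet> (y - x j)))"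
    using dist_centre_le[OF assms] sq_dist_le k h R r_pos two_r_le_R
    by (intro sum_mono profile_ge_neg_gauge) auto
  then show ?thesis
    unfolding subsolution_def gauge_sum_def by (simp add: sum_negf sum_distrib_left)
qed

lemma has_real_derivative_profile_scaled:
  assumes "j \<in> J" "0 \<le> s"
  shows "(profile k h (profile_scale k (h * R) (r j)) (r j) R has_real_derivative
     profile_density k h (profile_scale k (h * R) (r j)) (r j) s) (at s)"
  using r_pos[OF assms(1)] assms(2) by (rule has_real_derivative_profile)

lemma has_real_derivative_density_scaled:
  assumes "j \<in> J" "0 \<le> s"
  shows "(profile_density k h (profile_scale k (h * R) (r j)) (r j) has_real_derivative
     profile_density_deriv k h (profile_scale k (h * R) (r j)) (r j) s) (at s)"
  using r_pos[OF assms(1)] assms(2) by (intro has_real_derivative_profile_density) (simp add: add_nonneg_pos)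

lemma subsolution_continuous: "isCont (subsolution \<epsilon>) y"
  unfolding subsolution_def[abs_def]
  by (rule has_derivative_continuous[OF has_derivative_radial_sum[OF has_real_derivative_profile_scaled]])

lemma subsolution_visc_sub:
  assumes "0 < \<epsilon>"
  shows "visc_sub k h (1 / (\<epsilon> + K * gauge_sum)) balls (subsolution \<epsilon>)"
  unfolding visc_sub_def
proof (intro ballI allI impI)
  fix x0 phi Dphi Hphi
  assume x0: "x0 \<in> balls" and C2: "C2_near phi x0 Dphi Hphi"
    and touch: "\<exists>r>0. \<forall>y\<in>balls \<inter> ball x0 r. subsolution \<epsilon> y - phi y \<le> subsolution \<epsilon> x0 - phi x0"
  define lam where "lam j = profile_scale k (h * R) (r j)" for j
  define margin where "margin j = radial_margin k h (profile_density k h (lam j) (r j) ((x0 - x j) \<bullet> (x0 - x j)))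
    (profile_density_deriv k h (lam j) (r j) ((x0 - x j) \<bullet> (x0 - x j))) ((x0 - x j) \<bullet> (x0 - x j))" for j
  have "(\<Sum>j\<in>J. margin j) \<le> Pk_minus k (Hphi x0) - h * norm (Dphi x0)"
    unfolding margin_def lam_def
    by (rule Pk_minus_touching_radial_sum_ge[OF _ x0 C2 touch subsolution_def
          has_real_derivative_profile_scaled has_real_derivative_density_scaled _ k(2) h])
      (auto simp: balls_def profile_scale_nonneg intro!: profile_density_nonneg)
  moreover have "1 \<le> (\<Sum>j\<in>J. margin j)"
  proof -
    obtain i where i: "i \<in> J" "dist x0 (x i) < r i"
      using x0 unfolding balls_def by (auto simp: dist_commute)
    then have "(x0 - x i) \<bullet> (x0 - x i) < (r i)^2"
      by (simp add: dist_norm power2_norm_eq_inner[symmetric] power_strict_mono)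
    then have "1 \<le> margin i"
      unfolding margin_def lam_def using i two_r_le_R[OF i(1)] r_pos[OF i(1)]
      by (intro radial_margin_profile_ge_1 k h R) auto
    moreover have "0 \<le> margin j" if "j \<in> J - {i}" for j
      unfolding margin_def lam_def using that dist_centre_le[OF x0] sq_dist_le r_pos
      by (intro radial_margin_profile_nonneg h R) auto
    then have "0 \<le> (\<Sum>j\<in>J - {i}. margin j)" by (rule sum_nonneg)
    ultimately show ?thesis using finite i(1) by (simp add: sum.remove)
  qed
  moreover have "-1 \<le> 1 / (\<epsilon> + K * gauge_sum) * subsolution \<epsilon> x0"
  proof -
    have pos: "0 < \<epsilon> + K * gauge_sum"
      using assms gauge_constant_pos[OF k(1) R(2)] h R Psi_gauge_nonneg r_pos
      unfolding gauge_sum_def by (smt (verit) less_imp_le mult_nonneg_nonneg sum_nonneg)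
    then show ?thesis using subsolution_ge[OF x0, of \<epsilon>] by (simp add: field_simps)
  qed
  ultimately show "0 \<le> Pk_minus k (Hphi x0) - h * norm (Dphi x0) + 1 / (\<epsilon> + K * gauge_sum) * subsolution \<epsilon> x0"
    by linarith
qed

lemma mu_bar_ge:
  assumes "0 < \<epsilon>"
  shows "ereal (1 / (\<epsilon> + K * gauge_sum)) \<le> mu_bar k h E"
proof -
  have "ereal (1 / (\<epsilon> + K * gauge_sum)) \<le> mu_bar_open k h balls"
    unfolding mu_bar_open_def
    using usc_on_continuous[OF subsolution_continuous] subsolution_neg[OF assms]
      subsolution_visc_sub[OF assms]
    by (intro Sup_upper) blast
  also have "\<dots> \<le> mu_bar k h E"
    unfolding mu_bar_def balls_def using covers by (intro Sup_upper) auto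
  finally show ?thesis .
qed

end

section \<open>From finite covers to the generalized Hausdorff measure\<close>

lemma mu_bar_nonneg:
  fixes E :: "(real^'n) set"
  assumes k: "k \<le> CARD('n)" and h: "0 \<le> h"
  shows "0 \<le> mu_bar k h E"
proof -
  define w :: "real^'n \<Rightarrow> real" where "w = (\<lambda>_. -1)"
  have visc: "visc_sub k h 0 UNIV w"
    unfolding visc_sub_def
  proof (intro ballI allI impI)
    fix x0 :: "real^'n" and phi Dphi Hphi
    assume "x0 \<in> UNIV" "C2_near phi x0 Dphi Hphi"
      "\<exists>r>0. \<forall>y\<in>UNIV \<inter> ball x0 r. w y - phi y \<le> w x0 - phi x0"
    from Pk_minus_touching_radial_sum_ge[OF open_UNIV this, where J="{} :: nat set" and e="-1"] k h
    show "0 \<le> Pk_minus k (Hphi x0) - h * norm (Dphi x0) + 0 * w x0" by (simp add: w_def)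
  qed
  have "usc_on (closure UNIV) w" by (rule usc_on_continuous) (simp add: w_def)
  moreover have "\<forall>y\<in>closure UNIV. w y < 0" by (simp add: w_def)
  ultimately have "ereal 0 \<le> mu_bar_open k h (UNIV :: (real^'n) set)"
    unfolding mu_bar_open_def using visc by (intro Sup_upper) blast
  also have "\<dots> \<le> mu_bar k h E" unfolding mu_bar_def by (intro Sup_upper) auto
  finally show ?thesis by (simp add: zero_ereal_def)
qed

lemma small_finite_cover_of_gen_hausdorff_less:
  fixes E :: "(real^'n) set"
  assumes E: "compact E" and \<delta>: "0 < \<delta>" and less: "gen_hausdorff \<Psi> E < ennreal t"
    and \<Psi>: "\<And>r. 0 \<le> r \<Longrightarrow> 0 \<le> \<Psi> r"
  obtains J :: "nat set" and r x where "finite J" "\<And>j. j \<in> J \<Longrightarrow> 0 < r j \<and> r j \<le> \<delta>"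
    "\<And>j. j \<in> J \<Longrightarrow> \<exists>e\<in>E. dist e (x j) < r j" "E \<subseteq> (\<Union>j\<in>J. ball (x j) (r j))"
    "(\<Sum>j\<in>J. \<Psi> (r j)) < t"
proof -
  define Cov where "Cov = {(x :: nat \<Rightarrow> real^'n, r :: nat \<Rightarrow> real).
        E \<subseteq> (\<Union>j. ball (x j) (r j)) \<and> (\<forall>j. 0 \<le> r j \<and> r j \<le> \<delta>)}"
  have "(INF (x, r)\<in>Cov. (\<Sum>j. ennreal (\<Psi> (r j)))) \<le> gen_hausdorff \<Psi> E"
    unfolding gen_hausdorff_def Cov_def by (rule SUP_upper) (use \<delta> in simp)
  then have "(INF (x, r)\<in>Cov. (\<Sum>j. ennreal (\<Psi> (r j)))) < ennreal t" using less by simp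
  then obtain x r where "(x, r) \<in> Cov" and sum_less: "(\<Sum>j. ennreal (\<Psi> (r j))) < ennreal t"
    unfolding INF_less_iff by auto
  then have cover: "E \<subseteq> (\<Union>j. ball (x j) (r j))" and r: "\<And>j. 0 \<le> r j \<and> r j \<le> \<delta>"
    unfolding Cov_def by auto
  obtain J0 where J0: "finite J0" "E \<subseteq> (\<Union>j\<in>J0. ball (x j) (r j))"
    using compactE_image[OF E, of UNIV "\<lambda>j. ball (x j) (r j)"] cover by auto
  define J where "J = {j\<in>J0. \<exists>e\<in>E. dist e (x j) < r j}"
  show ?thesis
  proof (rule that[of J r x])
    show "finite J" unfolding J_def using J0(1) by simp
    show meets: "\<exists>e\<in>E. dist e (x j) < r j" if "j \<in> J" for j using that unfolding J_def by blast
    show "0 < r j \<and> r j \<le> \<delta>" if "j \<in> J" for j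
      using meets[OF that] r[of j] by (meson dist_not_less_zero le_less_trans not_le)
    show "E \<subseteq> (\<Union>j\<in>J. ball (x j) (r j))"
      using J0(2) unfolding J_def by (force simp: dist_commute)
    have "ennreal (\<Sum>j\<in>J. \<Psi> (r j)) = (\<Sum>j\<in>J. ennreal (\<Psi> (r j)))"
      using \<Psi> r by (intro sum_ennreal[symmetric]) auto
    also have "\<dots> \<le> (\<Sum>j. ennreal (\<Psi> (r j)))" using \<open>finite J\<close> by (intro sum_le_suminf) auto
    finally have "ennreal (\<Sum>j\<in>J. \<Psi> (r j)) < ennreal t" using sum_less by (rule le_less_trans)
    moreover have "0 \<le> (\<Sum>j\<in>J. \<Psi> (r j))" using \<Psi> r by (intro sum_nonneg) auto
    ultimately show "(\<Sum>j\<in>J. \<Psi> (r j)) < t" by (simp add: ennreal_less_iff)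
  qed
qed

lemma mu_bar_ge_if_gen_hausdorff_less:
  fixes E :: "(real^'n) set" and k :: nat
  assumes k: "1 \<le> k" "k \<le> CARD('n)" and h: "0 \<le> h" and R: "0 < R" "h * R < real k"
    and E: "compact E" "diameter E < R" and t: "0 < t"
    and less: "gen_hausdorff (Psi_gauge k R) E < ennreal t"
  shows "ereal (1 / (gauge_constant k (h * R) * t)) \<le> mu_bar k h E"
proof -
  have \<delta>: "0 < (R - diameter E) / 4" using E(2) by simp
  show ?thesis
  proof (rule small_finite_cover_of_gen_hausdorff_less[OF E(1) \<delta> less Psi_gauge_nonneg[OF _ R(1)]])
    fix J :: "nat set" and r x
    assume J: "finite J" and r: "\<And>j. j \<in> J \<Longrightarrow> 0 < r j \<and> r j \<le> (R - diameter E) / 4"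
      and meets: "\<And>j. j \<in> J \<Longrightarrow> \<exists>e\<in>E. dist e (x j) < r j"
      and covers: "E \<subseteq> (\<Union>j\<in>J. ball (x j) (r j))"
      and sum_less: "(\<Sum>j\<in>J. Psi_gauge k R (r j)) < t"
    have r_pos: "0 < r j" and r_small: "4 * r j \<le> R - diameter E" if "j \<in> J" for j
      using r[OF that] by (simp_all add: field_simps)
    interpret small_ball_cover k h R E J x r
      by (rule small_ball_cover.intro) (fact k h R compact_imp_bounded[OF E(1)] J r_pos r_small meets covers)+
    define \<epsilon> where "\<epsilon> = gauge_constant k (h * R) * (t - gauge_sum)"
    have "0 < gauge_constant k (h * R)" using gauge_constant_pos[OF k(1) R(2)] h R by simp
    then have "0 < \<epsilon>" unfolding \<epsilon>_def gauge_sum_def using sum_less by simp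
    moreover have "\<epsilon> + gauge_constant k (h * R) * gauge_sum = gauge_constant k (h * R) * t"
      unfolding \<epsilon>_def by (simp add: algebra_simps)
    ultimately show ?thesis using mu_bar_ge by metis
  qed
qed

lemma div_conv_le:
  fixes M :: ereal and H :: ennreal
  assumes C: "0 < C" and M: "0 \<le> M"
    and bound: "\<And>t. 0 < t \<Longrightarrow> H < ennreal t \<Longrightarrow> ereal (C / t) \<le> M"
  shows "div_conv C H \<le> M"
proof (cases "H = 0")
  case True
  have "M = \<infinity>"
  proof (rule ccontr)
    assume "M \<noteq> \<infinity>"
    then obtain m where m: "M = ereal m" "0 \<le> m" using M by (cases M) auto
    have "ereal (C / (C / (m + 1))) \<le> M" using True C m by (intro bound) auto
    then show False using C m by simp
  qed
  then show ?thesis by simp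
next
  case False
  show ?thesis
  proof (cases "H = top")
    case True
    then show ?thesis using M False unfolding div_conv_def by simp
  next
    case False2: False
    obtain x where x: "H = ennreal x" "0 < x"
      using False False2 by (cases H) (auto simp: ennreal_eq_0_iff)
    then have dc: "div_conv C H = ereal (C / x)"
      unfolding div_conv_def by (simp add: enn2ereal_ennreal)
    have "ereal (C / x) \<le> M"
    proof (rule ccontr)
      assume "\<not> ereal (C / x) \<le> M"
      then obtain m where m: "M = ereal m" "0 \<le> m" "m < C / x" using M by (cases M) auto
      define t where "t = 2 * C / (C / x + m)"
      have pos: "0 < C / x + m" using C x m by (simp add: add_pos_nonneg)
      have "x * m < C" using m(3) x by (simp add: field_simps)
      then have "x * (C / x + m) < 2 * C" using x by (simp add: distrib_left)
      then have "x < t" unfolding t_def using pos by (simp add: pos_less_divide_eq)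
      then have "ereal (C / t) \<le> M" using x C m by (intro bound) (auto simp: t_def ennreal_less_iff)
      moreover have "C / t = (C / x + m) / 2" unfolding t_def using C pos by (simp add: field_simps)
      ultimately show False using m by simp
    qed
    then show ?thesis using dc by simp
  qed
qed

theorem mainTheorem1:
  fixes k :: nat and a :: real
  assumes "CARD('n::finite) \<ge> 2"
    and "1 \<le> k" and "k \<le> CARD('n) - 1"
    and "0 \<le> a" and "a < real k"
  shows "\<exists>C>0. \<forall>(E :: (real^'n) set) R h.
           compact E \<and> R > 0 \<and> h \<ge> 0 \<and> h * R = a \<and> diameter E < R \<longrightarrow>
           mu_bar k h E \<ge> div_conv C (gen_hausdorff (Psi_gauge k R) E)"
proof (intro exI[of _ "1 / gauge_constant k a"] conjI allI impI)
  have k: "1 \<le> k" "k \<le> CARD('n)" using assms by auto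
  have K: "0 < gauge_constant k a" using assms by (intro gauge_constant_pos) auto
  then show "0 < 1 / gauge_constant k a" by simp
  fix E :: "(real^'n) set" and R h
  assume "compact E \<and> R > 0 \<and> h \<ge> 0 \<and> h * R = a \<and> diameter E < R"
  then have E: "compact E" "diameter E < R" and R: "0 < R" "h * R < real k" and h: "0 \<le> h"
    and a: "h * R = a"
    using assms by auto
  show "div_conv (1 / gauge_constant k a) (gen_hausdorff (Psi_gauge k R) E) \<le> mu_bar k h E"
  proof (rule div_conv_le)
    fix t :: real assume "0 < t" "gen_hausdorff (Psi_gauge k R) E < ennreal t"
    from mu_bar_ge_if_gen_hausdorff_less[OF k h R E this] a
    show "ereal (1 / gauge_constant k a / t) \<le> mu_bar k h E" by simp
  qed (use K mu_bar_nonneg[OF k(2) h] in auto)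
qed

end
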